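(* Let $m,d,L\ge2$ be integers and let $\mathcal{E}=\{\eta_i,\rho_i\}_{i=1}^{d+2}$ be the $m$-qudit ensemble with $\eta_i=\frac{1}{d^m+d}$, $\rho_i=\Psi^m_{i-1}$ for $i=1,\dots,d$; $\eta_{d+1}=\frac{d^m-d}{d^m+d}$, $\rho_{d+1}=\frac{1}{d^m-d}\big(\mathbb{1}^m_d-\sum_{j=0}^{d-1}\Psi^m_j\big)$; $\eta_{d+2}=\frac{d}{d^m+d}$, $\rho_{d+2}=\Phi^m_d$. Let $\mathcal{E}^1=\cdots=\mathcal{E}^L=\mathcal{E}$. Then $$\prod_{l=1}^Lp_{\sf L}(\mathcal{E}^l)=p_{\sf L}\Big(\bigotimes_{l=1}^L\mathcal{E}^l\Big)=p_{\sf SEP}\Big(\bigotimes_{l=1}^L\mathcal{E}^l\Big);$$ in particular the optimal LOCC discrimination of $\bigotimes_{l=1}^L\mathcal{E}^l$ is factorizable. Explicitly, the Hermitian operator $H=\frac{1}{(d^m+d)^L}(\mathbb{1}^m_d)^{\otimes L}$ and the LOCC measurements $\{M^l_i\}_{i=1}^{d+2}$ (all equal to $M_i=\Psi^m_{i-1}$ for $i\le d$, $M_{d+1}=\mathbb{1}^m_d-\sum_{j=0}^{d-1}\Psi^m_j$, $M_{d+2}=0$) satisfy $H-\eta_{\vec c}\rho_{\vec c}\in\mathbb{SEP}^*$ and $\operatorname{Tr}[M_{\vec c}(H-\eta_{\vec c}\rho_{\vec c})]=0$ for all $\vec c$, where $M_{\vec c}=M_{c_1}\otimes\cdots\otimes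 M_{c_L}$.
   Context: $\mathbb{1}^m_d$ is the identity on $(\mathbb{C}^d)^{\otimes m}$ (parties $\mathsf{A}_1,\dots,\mathsf{A}_m$, each holding one $\mathbb{C}^d$), $\Psi^m_i=|i\cdots i\rangle\langle i\cdots i|$, and $\Phi^m_d=\frac1d\sum_{i,j=0}^{d-1}|i\cdots i\rangle\langle j\cdots j|$ is the $m$-qudit GHZ state. For ensembles $\mathcal{E}^l=\{\eta^l_i,\rho^l_i\}_i$, the sequence ensemble $\bigotimes_l\mathcal{E}^l=\{\eta_{\vec c},\rho_{\vec c}\}_{\vec c}$ has $\eta_{\vec c}=\prod_l\eta^l_{c_l}$, $\rho_{\vec c}=\bigotimes_l\rho^l_{c_l}$ for $\vec c=(c_1,\dots,c_L)\in\{1,\dots,d+2\}^L$, and is regarded as an $m$-party ensemble where party $\mathsf{A}_k$ holds the $k$-th qudit of every copy. Separable operators are sums of tensor products over $\mathsf{A}_1,\dots,\mathsf{A}_m$ of positive semidefinite local operators; $\mathbb{SEP}^*$ is the set of Hermitian $E$ with $\operatorname{Tr}(E\sigma)\ge0$ for all separable states $\sigma$. A measurement is separable if all its elements are separable, LOCC if realizable by local operations and classical communication among the $m$ parties; for an ensemble $\{\eta_j,\rho_j\}_j$, $p_{\sf SEP}$ and $p_{\sf L}$ are the maxima of $\sum_j\eta_j\operatorname{Tr}(\rho_jM_j)$ over separable and LOCC measurements respectively. *)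

theory Defs
  imports Complex_Main "HOL-Library.FuncSet"
begin

text \<open>An operator on the Hilbert space with orthonormal basis indexed by a finite set S
  is represented by its matrix entries (only entries on S \<times> S matter).\<close>

type_synonym 'i qop = "'i \<Rightarrow> 'i \<Rightarrow> complex"

definition op_eq :: "'i set \<Rightarrow> 'i qop \<Rightarrow> 'i qop \<Rightarrow> bool" where
  "op_eq S A B \<longleftrightarrow> (\<forall>x\<in>S. \<forall>y\<in>S. A x y = B x y)"

definition mmult :: "'i set \<Rightarrow> 'i qop \<Rightarrow> 'i qop \<Rightarrow> 'i qop" where
  "mmult S A B = (\<lambda>x y. \<Sum>z\<in>S. A x z * B z y)"

definition adj :: "'i qop \<Rightarrow> 'i qop" where
  "adj A = (\<lambda>x y. cnj (A y x))"

definition idop :: "'i qop" where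
  "idop = (\<lambda>x y. if x = y then 1 else 0)"

definition zeroop :: "'i qop" where
  "zeroop = (\<lambda>x y. 0)"

definition tr :: "'i set \<Rightarrow> 'i qop \<Rightarrow> complex" where
  "tr S A = (\<Sum>x\<in>S. A x x)"

definition herm :: "'i set \<Rightarrow> 'i qop \<Rightarrow> bool" where
  "herm S A \<longleftrightarrow> (\<forall>x\<in>S. \<forall>y\<in>S. A x y = cnj (A y x))"

definition psd :: "'i set \<Rightarrow> 'i qop \<Rightarrow> bool" where
  "psd S A \<longleftrightarrow> herm S A \<and>
     (\<forall>v :: 'i \<Rightarrow> complex. 0 \<le> Re (\<Sum>x\<in>S. \<Sum>y\<in>S. cnj (v x) * A x y * v y))"

text \<open>m parties A_0,...,A_{m-1}; party k has local orthonormal basis LB k.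
  A global basis vector is a function x with x k \<in> LB k (tensor product basis).\<close>

definition gbasis :: "nat \<Rightarrow> (nat \<Rightarrow> 'b set) \<Rightarrow> (nat \<Rightarrow> 'b) set" where
  "gbasis m LB = PiE {..<m} LB"

definition lift :: "nat \<Rightarrow> nat \<Rightarrow> 'b qop \<Rightarrow> (nat \<Rightarrow> 'b) qop" where
  "lift m k P = (\<lambda>x y. if (\<forall>j<m. j \<noteq> k \<longrightarrow> x j = y j) then P (x k) (y k) else 0)"

definition prodop :: "nat \<Rightarrow> (nat \<Rightarrow> 'b qop) \<Rightarrow> (nat \<Rightarrow> 'b) qop" where
  "prodop m P = (\<lambda>x y. \<Prod>k<m. P k (x k) (y k))"

definition separable :: "nat \<Rightarrow> (nat \<Rightarrow> 'b set) \<Rightarrow> (nat \<Rightarrow> 'b) qop \<Rightarrow> bool" where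
  "separable m LB A \<longleftrightarrow> (\<exists>(N::nat) P. (\<forall>j<N. \<forall>k<m. psd (LB k) (P j k)) \<and>
     op_eq (gbasis m LB) A (\<lambda>x y. \<Sum>j<N. prodop m (P j) x y))"

definition sep_state :: "nat \<Rightarrow> (nat \<Rightarrow> 'b set) \<Rightarrow> (nat \<Rightarrow> 'b) qop \<Rightarrow> bool" where
  "sep_state m LB \<sigma> \<longleftrightarrow> separable m LB \<sigma> \<and> tr (gbasis m LB) \<sigma> = 1"

definition sep_dual :: "nat \<Rightarrow> (nat \<Rightarrow> 'b set) \<Rightarrow> (nat \<Rightarrow> 'b) qop \<Rightarrow> bool" where
  "sep_dual m LB E \<longleftrightarrow> herm (gbasis m LB) E \<and>
     (\<forall>\<sigma>. sep_state m LB \<sigma> \<longrightarrow>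
        Im (tr (gbasis m LB) (mmult (gbasis m LB) E \<sigma>)) = 0 \<and>
        0 \<le> Re (tr (gbasis m LB) (mmult (gbasis m LB) E \<sigma>)))"

definition povm :: "'i set \<Rightarrow> 'o set \<Rightarrow> ('o \<Rightarrow> 'i qop) \<Rightarrow> bool" where
  "povm S Out M \<longleftrightarrow> (\<forall>i\<in>Out. psd S (M i)) \<and> op_eq S (\<lambda>x y. \<Sum>i\<in>Out. M i x y) idop"

definition sep_meas :: "nat \<Rightarrow> (nat \<Rightarrow> 'b set) \<Rightarrow> 'o set \<Rightarrow> ('o \<Rightarrow> (nat \<Rightarrow> 'b) qop) \<Rightarrow> bool" where
  "sep_meas m LB Out M \<longleftrightarrow> povm (gbasis m LB) Out M \<and> (\<forall>i\<in>Out. separable m LB (M i))"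

text \<open>Either the protocol stops and outputs a fixed
  outcome c, or some party k applies a local instrument with Kraus operators K 0..K (r-1)
  (on its own space), broadcasts the result j, and the parties continue with an LOCC
  protocol Ms j (chosen depending on j).\<close>
inductive locc :: "nat \<Rightarrow> (nat \<Rightarrow> 'b set) \<Rightarrow> 'o set \<Rightarrow> ('o \<Rightarrow> (nat \<Rightarrow> 'b) qop) \<Rightarrow> bool"
  for m :: nat and LB :: "nat \<Rightarrow> 'b set" and Out :: "'o set" where
  stop: "(c::'o) \<in> Out \<Longrightarrow> (\<And>i. i \<in> Out \<Longrightarrow> op_eq (gbasis m LB) (M i) (if i = c then idop else zeroop))
         \<Longrightarrow> locc m LB Out M"
| round: "(k::nat) < m \<Longrightarrow>
     op_eq (LB k) (\<lambda>a b. \<Sum>j<(r::nat). mmult (LB k) (adj (K j)) (K j) a b) idop \<Longrightarrow>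
     (\<And>j. j < r \<Longrightarrow> locc m LB Out (Ms j)) \<Longrightarrow>
     (\<And>i. i \<in> Out \<Longrightarrow> op_eq (gbasis m LB) (M i)
        (\<lambda>x y. \<Sum>j<r. mmult (gbasis m LB)
             (mmult (gbasis m LB) (adj (lift m k (K j))) (Ms j i)) (lift m k (K j)) x y)) \<Longrightarrow>
     locc m LB Out M"

definition succ_prob :: "'i set \<Rightarrow> 'o set \<Rightarrow> ('o \<Rightarrow> real) \<Rightarrow> ('o \<Rightarrow> 'i qop) \<Rightarrow> ('o \<Rightarrow> 'i qop) \<Rightarrow> real" where
  "succ_prob S Out \<eta> \<rho> M = (\<Sum>i\<in>Out. \<eta> i * Re (tr S (mmult S (\<rho> i) (M i))))"

definition p_sep :: "nat \<Rightarrow> (nat \<Rightarrow> 'b set) \<Rightarrow> 'o set \<Rightarrow> ('o \<Rightarrow> real) \<Rightarrow> ('o \<Rightarrow> (nat \<Rightarrow> 'b) qop) \<Rightarrow> real" where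
  "p_sep m LB Out \<eta> \<rho> = Sup {succ_prob (gbasis m LB) Out \<eta> \<rho> M | M. sep_meas m LB Out M}"

definition p_locc :: "nat \<Rightarrow> (nat \<Rightarrow> 'b set) \<Rightarrow> 'o set \<Rightarrow> ('o \<Rightarrow> real) \<Rightarrow> ('o \<Rightarrow> (nat \<Rightarrow> 'b) qop) \<Rightarrow> real" where
  "p_locc m LB Out \<eta> \<rho> = Sup {succ_prob (gbasis m LB) Out \<eta> \<rho> M | M. locc m LB Out M}"

definition qudit_LB :: "nat \<Rightarrow> nat \<Rightarrow> nat set" where
  "qudit_LB d = (\<lambda>_. {..<d})"

definition Psi :: "nat \<Rightarrow> nat \<Rightarrow> (nat \<Rightarrow> nat) qop" where
  "Psi m i = (\<lambda>x y. if (\<forall>k<m. x k = i) \<and> (\<forall>k<m. y k = i) then 1 else 0)"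

definition Phi :: "nat \<Rightarrow> nat \<Rightarrow> (nat \<Rightarrow> nat) qop" where
  "Phi m d = (\<lambda>x y. (1 / of_nat d) *
      (\<Sum>i<d. \<Sum>j<d. if (\<forall>k<m. x k = i) \<and> (\<forall>k<m. y k = j) then 1 else 0))"

definition ens_eta :: "nat \<Rightarrow> nat \<Rightarrow> nat \<Rightarrow> real" where
  "ens_eta m d i =
     (if 1 \<le> i \<and> i \<le> d then 1 / (real d ^ m + real d)
      else if i = d + 1 then (real d ^ m - real d) / (real d ^ m + real d)
      else if i = d + 2 then real d / (real d ^ m + real d)
      else 0)"

definition ens_rho :: "nat \<Rightarrow> nat \<Rightarrow> nat \<Rightarrow> (nat \<Rightarrow> nat) qop" where
  "ens_rho m d i =
     (if 1 \<le> i \<and> i \<le> d then Psi m (i - 1)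
      else if i = d + 1 then
        (\<lambda>x y. (idop x y - (\<Sum>j<d. Psi m j x y)) / (of_real (real d ^ m - real d)))
      else if i = d + 2 then Phi m d
      else zeroop)"

definition meas_M :: "nat \<Rightarrow> nat \<Rightarrow> nat \<Rightarrow> (nat \<Rightarrow> nat) qop" where
  "meas_M m d i =
     (if 1 \<le> i \<and> i \<le> d then Psi m (i - 1)
      else if i = d + 1 then (\<lambda>x y. idop x y - (\<Sum>j<d. Psi m j x y))
      else zeroop)"

text \<open>L copies; party k holds the k-th qudit of every copy, so its local basis is
  {0..<L} \<rightarrow> {0..<d}. A global basis vector X has X k l = digit of qudit k of copy l.\<close>
definition seq_LB :: "nat \<Rightarrow> nat \<Rightarrow> nat \<Rightarrow> (nat \<Rightarrow> nat) set" where
  "seq_LB d L = (\<lambda>_. PiE {..<L} (\<lambda>_. {..<d}))"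

definition seq_outcomes :: "nat \<Rightarrow> nat \<Rightarrow> (nat \<Rightarrow> nat) set" where
  "seq_outcomes d L = PiE {..<L} (\<lambda>_. {1..d+2})"

definition copy_of :: "nat \<Rightarrow> nat \<Rightarrow> (nat \<Rightarrow> nat \<Rightarrow> nat) \<Rightarrow> (nat \<Rightarrow> nat)" where
  "copy_of m l X = (\<lambda>k. if k < m then X k l else undefined)"

definition seq_eta :: "(nat \<Rightarrow> real) \<Rightarrow> nat \<Rightarrow> (nat \<Rightarrow> nat) \<Rightarrow> real" where
  "seq_eta \<eta> L c = (\<Prod>l<L. \<eta> (c l))"

definition seq_op :: "nat \<Rightarrow> nat \<Rightarrow> (nat \<Rightarrow> (nat \<Rightarrow> nat) qop) \<Rightarrow> (nat \<Rightarrow> nat)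
    \<Rightarrow> (nat \<Rightarrow> nat \<Rightarrow> nat) qop" where
  "seq_op m L A c = (\<lambda>X Y. \<Prod>l<L. A (c l) (copy_of m l X) (copy_of m l Y))"

definition seqH :: "nat \<Rightarrow> nat \<Rightarrow> nat \<Rightarrow> (nat \<Rightarrow> nat \<Rightarrow> nat) qop" where
  "seqH m d L = (\<lambda>X Y. of_real (1 / (real d ^ m + real d) ^ L) * idop X Y)"

end

theory Submission
  imports Defs
begin

(* Let h = (d^m + d)^-L. Every weighted state eta_c rho_c of the sequence ensemble is h times
   the 0/1 matrix of a symmetric relation R on product basis vectors, and R has the property
   that (X, Y) |-> X(1 := Y 1) is injective on its support. For a tensor product of positive
   semidefinite operators, entrywise Cauchy-Schwarz and AM-GM bound |A Y X| by the mean of the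
   diagonal entries of A at X(1 := Y 1) and Y(1 := X 1); injectivity then gives
   tr (R A) <= tr A for every separable A. Hence H - eta_c rho_c lies in SEP*, and every
   separable (in particular every LOCC) measurement succeeds with probability at most
   h * dim. Measuring all qudits in the computational basis and guessing copy by copy is
   LOCC, attains this bound and satisfies complementary slackness. Since the bound for L
   copies is the L-th power of the bound for one copy, the optimal LOCC probability
   factorizes. *)

lemma psd_hermitian: "psd S P \<Longrightarrow> x \<in> S \<Longrightarrow> y \<in> S \<Longrightarrow> P x y = cnj (P y x)"
  unfolding psd_def herm_def by blast

lemma psd_diag_real:
  assumes "psd S P" "x \<in> S"
  shows "P x x = of_real (Re (P x x))"
  using psd_hermitian[OF assms assms(2)] by (simp add: complex_eq_iff)

lemma psd_form_nonneg: "psd S P \<Longrightarrow> 0 \<le> Re (\<Sum>x\<in>S. \<Sum>y\<in>S. cnj (v x) * P x y * v y)"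
  unfolding psd_def by blast

lemma quadratic_form_restrict:
  assumes "finite S" "T \<subseteq> S" "\<And>x. x \<in> S - T \<Longrightarrow> v x = 0"
  shows "(\<Sum>x\<in>S. \<Sum>y\<in>S. cnj (v x) * P x y * v y) = (\<Sum>x\<in>T. \<Sum>y\<in>T. cnj (v x) * P x y * v y)"
proof -
  have "(\<Sum>y\<in>S. cnj (v x) * P x y * v y) = (\<Sum>y\<in>T. cnj (v x) * P x y * v y)" for x
    by (rule sum.mono_neutral_right) (use assms in auto)
  then show ?thesis
    by (simp, intro sum.mono_neutral_right) (use assms in auto)
qed

lemma psd_diag_nonneg:
  assumes "psd S P" "finite S" "a \<in> S"
  shows "0 \<le> Re (P a a)"
proof -
  let ?v = "\<lambda>x. if x = a then 1 else 0"
  have "(\<Sum>x\<in>S. \<Sum>y\<in>S. cnj (?v x) * P x y * ?v y) = P a a"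
    using quadratic_form_restrict[of S "{a}" ?v P] assms(2,3) by simp
  then show ?thesis using psd_form_nonneg[OF assms(1), of ?v] by simp
qed

lemma nonneg_quadratic_discriminant:
  fixes q a b :: real
  assumes "0 \<le> q" "0 \<le> a" "\<And>t. 0 \<le> t\<^sup>2 * q * a - 2 * t * q + b"
  shows "q \<le> a * b"
proof (cases "a = 0")
  case True
  show ?thesis
  proof (rule ccontr)
    assume "\<not> q \<le> a * b"
    then have "0 < q" using True by simp
    have "0 \<le> ((b + 1) / (2 * q))\<^sup>2 * q * a - 2 * ((b + 1) / (2 * q)) * q + b" by (rule assms(3))
    also have "\<dots> = -1" using True \<open>0 < q\<close> by (simp add: field_simps)
    finally show False by simp
  qed
next
  case False
  then have "0 < a" using assms(2) by simp
  have "0 \<le> (1 / a)\<^sup>2 * q * a - 2 * (1 / a) * q + b" by (rule assms(3))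
  also have "\<dots> = (a * b - q) / a" using \<open>0 < a\<close> by (simp add: field_simps power2_eq_square)
  finally show ?thesis using \<open>0 < a\<close> by (simp add: zero_le_divide_iff)
qed

lemma psd_cauchy_schwarz:
  assumes "psd S P" "finite S" "a \<in> S" "b \<in> S"
  shows "(cmod (P a b))\<^sup>2 \<le> Re (P a a) * Re (P b b)"
proof (cases "a = b")
  case True
  have "cmod (P a a) = Re (P a a)"
    using psd_diag_real[OF assms(1,3)] psd_diag_nonneg[OF assms(1-3)] by (metis abs_of_nonneg norm_of_real)
  then show ?thesis using True by (simp add: power2_eq_square)
next
  case False
  define z pa pb where "z = P a b" and "pa = Re (P a a)" and "pb = Re (P b b)"
  have Paa: "P a a = of_real pa" and Pbb: "P b b = of_real pb" and Pba: "P b a = cnj z"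
    using psd_diag_real[OF assms(1,3)] psd_diag_real[OF assms(1,4)] psd_hermitian[OF assms(1,4,3)]
    by (simp_all add: z_def pa_def pb_def)
  have "0 \<le> t\<^sup>2 * (cmod z)\<^sup>2 * pa - 2 * t * (cmod z)\<^sup>2 + pb" for t
  proof -
    let ?u = "- of_real t * z"
    let ?v = "\<lambda>x. if x = a then ?u else if x = b then 1 else 0"
    have "(\<Sum>x\<in>S. \<Sum>y\<in>S. cnj (?v x) * P x y * ?v y)
        = cnj ?u * P a a * ?u + cnj ?u * P a b * 1 + cnj 1 * P b a * ?u + cnj 1 * P b b * 1"
      using quadratic_form_restrict[of S "{a, b}" ?v P] assms(2-4) False by simp
    also have "\<dots> = of_real (t\<^sup>2 * pa) * (cnj z * z) - of_real (2 * t) * (cnj z * z) + of_real pb"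
      unfolding Paa Pbb Pba z_def[symmetric] by (simp add: power2_eq_square algebra_simps)
    also have "cnj z * z = of_real ((cmod z)\<^sup>2)"
      by (metis complex_norm_square mult.commute of_real_power)
    finally have "Re (\<Sum>x\<in>S. \<Sum>y\<in>S. cnj (?v x) * P x y * ?v y) = t\<^sup>2 * (cmod z)\<^sup>2 * pa - 2 * t * (cmod z)\<^sup>2 + pb"
      by simp
    then show ?thesis using psd_form_nonneg[OF assms(1), of ?v] by simp
  qed
  then have "(cmod z)\<^sup>2 \<le> pa * pb"
    using psd_diag_nonneg[OF assms(1-3)] by (intro nonneg_quadratic_discriminant) (auto simp: pa_def)
  then show ?thesis unfolding z_def pa_def pb_def .
qed

lemma tr_cong: "op_eq S A B \<Longrightarrow> tr S A = tr S B"
  unfolding op_eq_def tr_def by simp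

lemma tr_sum: "tr S (\<lambda>x y. \<Sum>j\<in>J. A j x y) = (\<Sum>j\<in>J. tr S (A j))"
  unfolding tr_def by (rule sum.swap)

lemma tr_idop: "tr S idop = of_nat (card S)"
  unfolding tr_def idop_def by simp

lemma tr_mmult_cong_left:
  "(\<And>x y. x \<in> S \<Longrightarrow> y \<in> S \<Longrightarrow> A x y = B x y) \<Longrightarrow> tr S (mmult S A C) = tr S (mmult S B C)"
  unfolding tr_def mmult_def by simp

lemma tr_mmult_cong_right: "op_eq S B C \<Longrightarrow> tr S (mmult S A B) = tr S (mmult S A C)"
  unfolding op_eq_def tr_def mmult_def by simp

lemma tr_mmult_sum_right:
  "tr S (mmult S A (\<lambda>x y. \<Sum>j\<in>J. B j x y)) = (\<Sum>j\<in>J. tr S (mmult S A (B j)))"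
  unfolding tr_def mmult_def by (simp add: sum_distrib_left) (simp only: sum.swap[of _ J])

lemma tr_mmult_scale_left:
  "tr S (mmult S (\<lambda>x y. c * A x y) B) = c * tr S (mmult S A B)"
  unfolding tr_def mmult_def by (simp add: sum_distrib_left mult.assoc)

lemma tr_mmult_diff_left:
  "tr S (mmult S (\<lambda>x y. A x y - B x y) C) = tr S (mmult S A C) - tr S (mmult S B C)"
  unfolding tr_def mmult_def by (simp add: left_diff_distrib sum_subtractf)

lemma tr_mmult_idop_left: "finite S \<Longrightarrow> tr S (mmult S idop B) = tr S B"
  unfolding tr_def mmult_def idop_def by (simp add: if_distrib[of "\<lambda>c. c * _"] cong: if_cong)

lemma tr_mmult_hermitian_real:
  assumes "herm S E" "herm S B"
  shows "Im (tr S (mmult S E B)) = 0"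
proof -
  have "cnj (tr S (mmult S E B)) = (\<Sum>x\<in>S. \<Sum>y\<in>S. cnj (E x y) * cnj (B y x))"
    unfolding tr_def mmult_def by simp
  also have "\<dots> = (\<Sum>x\<in>S. \<Sum>y\<in>S. E y x * B x y)"
    using assms unfolding herm_def by (intro sum.cong refl) (metis complex_cnj_cnj)
  also have "\<dots> = tr S (mmult S E B)"
    unfolding tr_def mmult_def by (rule sum.swap)
  finally show ?thesis by (metis Reals_cnj_iff complex_is_Real_iff)
qed

lemma gbasis_memD: "x \<in> gbasis m LB \<Longrightarrow> j < m \<Longrightarrow> x j \<in> LB j"
  unfolding gbasis_def by (auto simp: PiE_iff)

lemma gbasis_undefined: "x \<in> gbasis m LB \<Longrightarrow> \<not> j < m \<Longrightarrow> x j = undefined"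
  unfolding gbasis_def by (auto simp: PiE_iff extensional_def)

lemma gbasis_eqI:
  "x \<in> gbasis m LB \<Longrightarrow> y \<in> gbasis m LB \<Longrightarrow> (\<And>j. j < m \<Longrightarrow> x j = y j) \<Longrightarrow> x = y"
  by (metis gbasis_undefined ext)

lemma fun_upd_in_gbasis:
  "x \<in> gbasis m LB \<Longrightarrow> k < m \<Longrightarrow> a \<in> LB k \<Longrightarrow> x(k := a) \<in> gbasis m LB"
  unfolding gbasis_def by (auto simp: PiE_iff extensional_def)

lemma finite_gbasis: "(\<And>k. k < m \<Longrightarrow> finite (LB k)) \<Longrightarrow> finite (gbasis m LB)"
  unfolding gbasis_def by (rule finite_PiE) auto

lemma fun_upd_eq_fun_upd_iff:
  assumes "x \<in> gbasis m LB" "y \<in> gbasis m LB" "k < m"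
  shows "x(k := a) = y(k := b) \<longleftrightarrow> a = b \<and> (\<forall>j<m. j \<noteq> k \<longrightarrow> x j = y j)"
proof
  assume "x(k := a) = y(k := b)"
  then show "a = b \<and> (\<forall>j<m. j \<noteq> k \<longrightarrow> x j = y j)"
    by (metis fun_upd_same fun_upd_other)
next
  assume "a = b \<and> (\<forall>j<m. j \<noteq> k \<longrightarrow> x j = y j)"
  then show "x(k := a) = y(k := b)"
    using gbasis_undefined[OF assms(1)] gbasis_undefined[OF assms(2)] by (auto simp: fun_eq_iff) (metis)
qed

lemma gbasis_eq_iff_split:
  assumes "x \<in> gbasis m LB" "y \<in> gbasis m LB" "k < m"
  shows "x = y \<longleftrightarrow> (\<forall>j<m. j \<noteq> k \<longrightarrow> x j = y j) \<and> x k = y k"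
  using gbasis_eqI[OF assms(1,2)] by auto

lemma sum_gbasis_agree_except:
  assumes fin: "\<And>k. k < m \<Longrightarrow> finite (LB k)" and x: "x \<in> gbasis m LB" and k: "k < m"
  shows "(\<Sum>z\<in>gbasis m LB. if \<forall>j<m. j \<noteq> k \<longrightarrow> z j = x j then F z else 0)
       = (\<Sum>a\<in>LB k. F (x(k := a)))"
proof -
  have "{z \<in> gbasis m LB. \<forall>j<m. j \<noteq> k \<longrightarrow> z j = x j} = (\<lambda>a. x(k := a)) ` LB k"
  proof (intro set_eqI iffI)
    fix z assume z: "z \<in> {z \<in> gbasis m LB. \<forall>j<m. j \<noteq> k \<longrightarrow> z j = x j}"
    then have "z = x(k := z k)"
      by (intro gbasis_eqI[OF _ fun_upd_in_gbasis[OF x k]]) (auto intro: gbasis_memD[OF _ k])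
    then show "z \<in> (\<lambda>a. x(k := a)) ` LB k" using z k gbasis_memD[of z m LB k] by auto
  qed (auto intro: fun_upd_in_gbasis[OF x k])
  moreover have "inj_on (\<lambda>a. x(k := a)) (LB k)"
    by (rule inj_onI) (metis fun_upd_same)
  ultimately show ?thesis
    by (simp add: sum.inter_filter[symmetric] finite_gbasis[OF fin] sum.reindex)
qed


definition sandwich :: "'i set \<Rightarrow> 'i qop \<Rightarrow> 'i qop \<Rightarrow> 'i qop" where
  "sandwich S K A = mmult S (mmult S (adj K) A) K"

lemma sandwich_eq: "sandwich S K A x y = (\<Sum>a\<in>S. \<Sum>b\<in>S. cnj (K a x) * A a b * K b y)"
  unfolding sandwich_def mmult_def adj_def by (simp add: sum_distrib_right) (rule sum.swap)

lemma sandwich_sum: "sandwich S K (\<lambda>x y. \<Sum>i\<in>I. A i x y) x y = (\<Sum>i\<in>I. sandwich S K (A i) x y)"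
  unfolding sandwich_eq by (simp only: sum_distrib_left sum_distrib_right sum.swap[of _ S I])

lemma herm_sandwich:
  assumes "herm S P"
  shows "herm S (sandwich S K P)"
  unfolding herm_def sandwich_eq
proof (intro ballI)
  fix x y assume "x \<in> S" "y \<in> S"
  have "cnj (\<Sum>a\<in>S. \<Sum>b\<in>S. cnj (K a y) * P a b * K b x) = (\<Sum>a\<in>S. \<Sum>b\<in>S. K a y * cnj (P a b) * cnj (K b x))"
    by simp
  also have "\<dots> = (\<Sum>a\<in>S. \<Sum>b\<in>S. K a y * P b a * cnj (K b x))"
    using assms unfolding herm_def by (intro sum.cong refl) (metis complex_cnj_cnj)
  also have "\<dots> = (\<Sum>a\<in>S. \<Sum>b\<in>S. cnj (K a x) * P a b * K b y)"
    by (subst sum.swap) (simp add: mult_ac)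
  finally show "(\<Sum>a\<in>S. \<Sum>b\<in>S. cnj (K a x) * P a b * K b y) = cnj (\<Sum>a\<in>S. \<Sum>b\<in>S. cnj (K a y) * P a b * K b x)"
    by simp
qed

lemma quadratic_form_sandwich:
  "(\<Sum>x\<in>S. \<Sum>y\<in>S. cnj (v x) * sandwich S K P x y * v y)
   = (\<Sum>a\<in>S. \<Sum>b\<in>S. cnj (\<Sum>x\<in>S. K a x * v x) * P a b * (\<Sum>y\<in>S. K b y * v y))"
proof -
  define f where "f x y a b = cnj (v x) * (cnj (K a x) * P a b * K b y) * v y" for x y a b
  have "(\<Sum>x\<in>S. \<Sum>y\<in>S. cnj (v x) * sandwich S K P x y * v y) = (\<Sum>x\<in>S. \<Sum>y\<in>S. \<Sum>a\<in>S. \<Sum>b\<in>S. f x y a b)"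
    unfolding sandwich_eq f_def by (simp only: sum_distrib_left sum_distrib_right)
  also have "\<dots> = (\<Sum>x\<in>S. \<Sum>a\<in>S. \<Sum>y\<in>S. \<Sum>b\<in>S. f x y a b)"
    by (rule sum.cong[OF refl], rule sum.swap)
  also have "\<dots> = (\<Sum>a\<in>S. \<Sum>x\<in>S. \<Sum>y\<in>S. \<Sum>b\<in>S. f x y a b)"
    by (rule sum.swap)
  also have "\<dots> = (\<Sum>a\<in>S. \<Sum>x\<in>S. \<Sum>b\<in>S. \<Sum>y\<in>S. f x y a b)"
    by (rule sum.cong[OF refl], rule sum.cong[OF refl], rule sum.swap)
  also have "\<dots> = (\<Sum>a\<in>S. \<Sum>b\<in>S. \<Sum>x\<in>S. \<Sum>y\<in>S. f x y a b)"
    by (rule sum.cong[OF refl], rule sum.swap)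
  also have "\<dots> = (\<Sum>a\<in>S. \<Sum>b\<in>S. cnj (\<Sum>x\<in>S. K a x * v x) * P a b * (\<Sum>y\<in>S. K b y * v y))"
  proof (intro sum.cong refl)
    fix a b
    have "cnj (\<Sum>x\<in>S. K a x * v x) * P a b * (\<Sum>y\<in>S. K b y * v y)
        = (\<Sum>x\<in>S. cnj (K a x * v x)) * (\<Sum>y\<in>S. P a b * (K b y * v y))"
      by (simp only: cnj_sum sum_distrib_left mult.assoc)
    also have "\<dots> = (\<Sum>x\<in>S. \<Sum>y\<in>S. f x y a b)"
      unfolding sum_product f_def by (intro sum.cong refl) (simp add: mult_ac)
    finally show "(\<Sum>x\<in>S. \<Sum>y\<in>S. f x y a b) = cnj (\<Sum>x\<in>S. K a x * v x) * P a b * (\<Sum>y\<in>S. K b y * v y)" ..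
  qed
  finally show ?thesis .
qed

lemma psd_sandwich:
  assumes "psd S P"
  shows "psd S (sandwich S K P)"
proof -
  have "0 \<le> Re (\<Sum>x\<in>S. \<Sum>y\<in>S. cnj (v x) * sandwich S K P x y * v y)" for v
    unfolding quadratic_form_sandwich by (rule psd_form_nonneg[OF assms])
  then show ?thesis using herm_sandwich assms unfolding psd_def by blast
qed

lemma sum_lift_right:
  assumes fin: "\<And>k. k < m \<Longrightarrow> finite (LB k)" and k: "k < m" and y: "y \<in> gbasis m LB"
  shows "(\<Sum>z\<in>gbasis m LB. F z * lift m k K z y) = (\<Sum>b\<in>LB k. F (y(k := b)) * K b (y k))"
proof -
  have "(\<Sum>z\<in>gbasis m LB. F z * lift m k K z y)
      = (\<Sum>z\<in>gbasis m LB. if \<forall>j<m. j \<noteq> k \<longrightarrow> z j = y j then F z * K (z k) (y k) else 0)"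
    by (intro sum.cong refl) (auto simp: lift_def)
  then show ?thesis by (simp add: sum_gbasis_agree_except[OF fin y k])
qed

lemma sum_lift_left:
  assumes fin: "\<And>k. k < m \<Longrightarrow> finite (LB k)" and k: "k < m" and x: "x \<in> gbasis m LB"
  shows "(\<Sum>z\<in>gbasis m LB. cnj (lift m k K z x) * F z) = (\<Sum>a\<in>LB k. cnj (K a (x k)) * F (x(k := a)))"
proof -
  have "(\<Sum>z\<in>gbasis m LB. cnj (lift m k K z x) * F z)
      = (\<Sum>z\<in>gbasis m LB. if \<forall>j<m. j \<noteq> k \<longrightarrow> z j = x j then cnj (K (z k) (x k)) * F z else 0)"
    by (intro sum.cong refl) (auto simp: lift_def)
  then show ?thesis by (simp add: sum_gbasis_agree_except[OF fin x k])
qed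

lemma sandwich_lift_eq:
  assumes fin: "\<And>k. k < m \<Longrightarrow> finite (LB k)" and k: "k < m"
    and x: "x \<in> gbasis m LB" and y: "y \<in> gbasis m LB"
  shows "sandwich (gbasis m LB) (lift m k K) A x y
       = (\<Sum>a\<in>LB k. \<Sum>b\<in>LB k. cnj (K a (x k)) * A (x(k := a)) (y(k := b)) * K b (y k))"
proof -
  let ?G = "gbasis m LB"
  have "sandwich ?G (lift m k K) A x y = (\<Sum>z\<in>?G. cnj (lift m k K z x) * (\<Sum>w\<in>?G. A z w * lift m k K w y))"
    unfolding sandwich_eq by (simp only: sum_distrib_left mult.assoc)
  also have "\<dots> = (\<Sum>a\<in>LB k. cnj (K a (x k)) * (\<Sum>b\<in>LB k. A (x(k := a)) (y(k := b)) * K b (y k)))"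
    by (simp only: sum_lift_right[OF fin k y] sum_lift_left[OF fin k x])
  finally show ?thesis by (simp only: sum_distrib_left mult.assoc)
qed

lemma sandwich_lift_cong:
  assumes fin: "\<And>k. k < m \<Longrightarrow> finite (LB k)" and k: "k < m"
    and x: "x \<in> gbasis m LB" and y: "y \<in> gbasis m LB" and AB: "op_eq (gbasis m LB) A B"
  shows "sandwich (gbasis m LB) (lift m k K) A x y = sandwich (gbasis m LB) (lift m k K) B x y"
  using AB fun_upd_in_gbasis[OF x k] fun_upd_in_gbasis[OF y k]
  by (simp add: sandwich_lift_eq[OF fin k x y] op_eq_def)

lemma lift_idop:
  assumes "x \<in> gbasis m LB" "y \<in> gbasis m LB" "k < m"
  shows "lift m k idop x y = idop x y"
  unfolding lift_def idop_def using gbasis_eq_iff_split[OF assms] by auto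

lemma sandwich_lift_idop:
  assumes fin: "\<And>k. k < m \<Longrightarrow> finite (LB k)" and k: "k < m"
    and x: "x \<in> gbasis m LB" and y: "y \<in> gbasis m LB"
  shows "sandwich (gbasis m LB) (lift m k K) idop x y = lift m k (mmult (LB k) (adj K) K) x y"
proof (cases "\<forall>j<m. j \<noteq> k \<longrightarrow> x j = y j")
  case True
  have "sandwich (gbasis m LB) (lift m k K) idop x y
      = (\<Sum>a\<in>LB k. \<Sum>b\<in>LB k. cnj (K a (x k)) * idop (x(k := a)) (y(k := b)) * K b (y k))"
    by (rule sandwich_lift_eq[OF fin k x y])
  also have "\<dots> = (\<Sum>a\<in>LB k. \<Sum>b\<in>LB k. if b = a then cnj (K a (x k)) * K b (y k) else 0)"
    by (intro sum.cong refl) (auto simp: idop_def fun_upd_eq_fun_upd_iff[OF x y k] True)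
  also have "\<dots> = lift m k (mmult (LB k) (adj K) K) x y"
    using True fin[OF k] by (simp add: lift_def mmult_def adj_def)
  finally show ?thesis .
next
  case False
  have "sandwich (gbasis m LB) (lift m k K) idop x y
      = (\<Sum>a\<in>LB k. \<Sum>b\<in>LB k. cnj (K a (x k)) * idop (x(k := a)) (y(k := b)) * K b (y k))"
    by (rule sandwich_lift_eq[OF fin k x y])
  also have "\<dots> = 0"
    using False by (auto simp: idop_def fun_upd_eq_fun_upd_iff[OF x y k] intro!: sum.neutral)
  moreover have "lift m k (mmult (LB k) (adj K) K) x y = 0"
    using False by (auto simp: lift_def)
  ultimately show ?thesis by simp
qed

lemma prodop_remove:
  "k < m \<Longrightarrow> prodop m P x y = P k (x k) (y k) * (\<Prod>j\<in>{..<m} - {k}. P j (x j) (y j))"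
  unfolding prodop_def by (simp add: prod.remove)

lemma sandwich_lift_prodop:
  assumes fin: "\<And>k. k < m \<Longrightarrow> finite (LB k)" and k: "k < m"
    and x: "x \<in> gbasis m LB" and y: "y \<in> gbasis m LB"
  shows "sandwich (gbasis m LB) (lift m k K) (prodop m P) x y
       = prodop m (P(k := sandwich (LB k) K (P k))) x y"
proof -
  let ?R = "\<Prod>j\<in>{..<m} - {k}. P j (x j) (y j)"
  have "prodop m P (x(k := a)) (y(k := b)) = P k a b * ?R" for a b
  proof -
    have "(\<Prod>j\<in>{..<m} - {k}. P j ((x(k := a)) j) ((y(k := b)) j)) = ?R"
      by (rule prod.cong) auto
    then show ?thesis unfolding prodop_remove[OF k] by simp
  qed
  then have "sandwich (gbasis m LB) (lift m k K) (prodop m P) x y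
      = (\<Sum>a\<in>LB k. \<Sum>b\<in>LB k. cnj (K a (x k)) * (P k a b * ?R) * K b (y k))"
    by (simp add: sandwich_lift_eq[OF fin k x y])
  also have "\<dots> = (\<Sum>a\<in>LB k. \<Sum>b\<in>LB k. cnj (K a (x k)) * P k a b * K b (y k)) * ?R"
    by (simp only: sum_distrib_right) (intro sum.cong refl, simp add: mult_ac)
  also have "\<dots> = prodop m (P(k := sandwich (LB k) K (P k))) x y"
  proof -
    have "(\<Prod>j\<in>{..<m} - {k}. (P(k := sandwich (LB k) K (P k))) j (x j) (y j)) = ?R"
      by (rule prod.cong) auto
    then show ?thesis
      unfolding prodop_remove[OF k, of "P(k := sandwich (LB k) K (P k))"] sandwich_eq by simp
  qed
  finally show ?thesis .
qed

section \<open>Separable operators and LOCC measurements\<close>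

lemma sum_lessThan_add_split: "(\<Sum>j<(a::nat) + b. f j) = (\<Sum>j<a. f j) + (\<Sum>j<b. f (a + j))"
  by (induction b) (simp_all add: add.assoc)

lemma separable_cong: "op_eq (gbasis m LB) A B \<Longrightarrow> separable m LB B \<Longrightarrow> separable m LB A"
  unfolding separable_def op_eq_def by metis

lemma separable_zero: "separable m LB (\<lambda>x y. 0)"
  unfolding separable_def op_eq_def by (rule exI[of _ 0]) simp

lemma separable_add:
  assumes "separable m LB A" "separable m LB B"
  shows "separable m LB (\<lambda>x y. A x y + B x y)"
proof -
  obtain N1 :: nat and P1 where P1: "\<forall>j<N1. \<forall>k<m. psd (LB k) (P1 j k)"
      "op_eq (gbasis m LB) A (\<lambda>x y. \<Sum>j<N1. prodop m (P1 j) x y)"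
    using assms(1) unfolding separable_def by auto
  obtain N2 :: nat and P2 where P2: "\<forall>j<N2. \<forall>k<m. psd (LB k) (P2 j k)"
      "op_eq (gbasis m LB) B (\<lambda>x y. \<Sum>j<N2. prodop m (P2 j) x y)"
    using assms(2) unfolding separable_def by auto
  define P where "P j = (if j < N1 then P1 j else P2 (j - N1))" for j
  have "\<forall>j<N1 + N2. \<forall>k<m. psd (LB k) (P j k)"
    using P1(1) P2(1) unfolding P_def by auto
  moreover have "op_eq (gbasis m LB) (\<lambda>x y. A x y + B x y) (\<lambda>x y. \<Sum>j<N1 + N2. prodop m (P j) x y)"
    using P1(2) P2(2) unfolding op_eq_def sum_lessThan_add_split P_def by simp
  ultimately show ?thesis unfolding separable_def by blast
qed

lemma separable_sum:
  "finite I \<Longrightarrow> (\<And>i. i \<in> I \<Longrightarrow> separable m LB (A i)) \<Longrightarrow> separable m LB (\<lambda>x y. \<Sum>i\<in>I. A i x y)"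
  by (induction I rule: finite_induct) (simp_all add: separable_zero separable_add)

lemma psd_diagonal_indicator:
  assumes "finite S"
  shows "psd S (\<lambda>x y. if x = y \<and> Q x then 1 else 0)"
  unfolding psd_def
proof (intro conjI allI)
  show "herm S (\<lambda>x y. if x = y \<and> Q x then 1 else 0)" unfolding herm_def by auto
next
  fix v :: "'a \<Rightarrow> complex"
  have "(\<Sum>y\<in>S. cnj (v x) * (if x = y \<and> Q x then 1 else 0) * v y)
      = (if Q x then of_real ((cmod (v x))\<^sup>2) else 0)" if "x \<in> S" for x
  proof -
    have "(\<Sum>y\<in>S. cnj (v x) * (if x = y \<and> Q x then 1 else 0) * v y)
        = (\<Sum>y\<in>S. if y = x then (if Q x then cnj (v x) * v x else 0) else 0)"
      by (rule sum.cong) auto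
    also have "\<dots> = (if Q x then of_real ((cmod (v x))\<^sup>2) else 0)"
      using that assms complex_norm_square[of "v x"] by (simp add: mult.commute)
    finally show ?thesis .
  qed
  then show "0 \<le> Re (\<Sum>x\<in>S. \<Sum>y\<in>S. cnj (v x) * (if x = y \<and> Q x then 1 else 0) * v y)"
    by (simp add: Re_sum sum_nonneg)
qed

lemma psd_idop: "finite S \<Longrightarrow> psd S idop"
  using psd_diagonal_indicator[of S "\<lambda>_. True"] by (simp add: idop_def)

lemma prodop_idop:
  assumes "x \<in> gbasis m LB" "y \<in> gbasis m LB"
  shows "prodop m (\<lambda>k. idop) x y = idop x y"
  unfolding prodop_def idop_def using gbasis_eqI[OF assms] by (auto intro: prod_zero)

lemma separable_idop: "(\<And>k. k < m \<Longrightarrow> finite (LB k)) \<Longrightarrow> separable m LB idop"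
  unfolding separable_def op_eq_def
  by (intro exI[of _ "1::nat"] exI[of _ "\<lambda>j k. idop"]) (simp add: psd_idop prodop_idop)

lemma separable_sandwich_lift:
  assumes fin: "\<And>k. k < m \<Longrightarrow> finite (LB k)" and k: "k < m" and A: "separable m LB A"
  shows "separable m LB (sandwich (gbasis m LB) (lift m k K) A)"
proof -
  let ?G = "gbasis m LB"
  obtain N :: nat and P where P: "\<forall>j<N. \<forall>k<m. psd (LB k) (P j k)"
      "op_eq ?G A (\<lambda>x y. \<Sum>j<N. prodop m (P j) x y)"
    using A unfolding separable_def by auto
  define P' where "P' j = (P j)(k := sandwich (LB k) K (P j k))" for j
  have "\<forall>j<N. \<forall>k<m. psd (LB k) (P' j k)"
    unfolding P'_def using P(1) by (auto intro: psd_sandwich)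
  moreover have "op_eq ?G (sandwich ?G (lift m k K) A) (\<lambda>x y. \<Sum>j<N. prodop m (P' j) x y)"
    unfolding op_eq_def
  proof (intro ballI)
    fix x y assume x: "x \<in> ?G" and y: "y \<in> ?G"
    have "sandwich ?G (lift m k K) A x y = sandwich ?G (lift m k K) (\<lambda>x y. \<Sum>j<N. prodop m (P j) x y) x y"
      by (rule sandwich_lift_cong[OF fin k x y P(2)])
    also have "\<dots> = (\<Sum>j<N. prodop m (P' j) x y)"
      by (simp only: sandwich_sum P'_def sandwich_lift_prodop[OF fin k x y])
    finally show "sandwich ?G (lift m k K) A x y = (\<Sum>j<N. prodop m (P' j) x y)" .
  qed
  ultimately show ?thesis unfolding separable_def by blast
qed

lemma separable_hermitian:
  assumes A: "separable m LB A"
  shows "herm (gbasis m LB) A"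
proof -
  obtain N :: nat and P where P: "\<forall>j<N. \<forall>k<m. psd (LB k) (P j k)"
      "op_eq (gbasis m LB) A (\<lambda>x y. \<Sum>j<N. prodop m (P j) x y)"
    using A unfolding separable_def by auto
  have prodop_herm: "prodop m (P j) x y = cnj (prodop m (P j) y x)"
    if j: "j < N" and x: "x \<in> gbasis m LB" and y: "y \<in> gbasis m LB" for j x y
    unfolding prodop_def cnj_prod
  proof (rule prod.cong[OF refl])
    fix k assume "k \<in> {..<m}"
    then show "P j k (x k) (y k) = cnj (P j k (y k) (x k))"
      using P(1) j psd_hermitian[of "LB k" "P j k" "x k" "y k"] gbasis_memD[OF x, of k] gbasis_memD[OF y, of k]
      by simp
  qed
  show ?thesis
    unfolding herm_def
  proof (intro ballI)
    fix x y assume x: "x \<in> gbasis m LB" and y: "y \<in> gbasis m LB"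
    have "A x y = (\<Sum>j<N. prodop m (P j) x y)" "A y x = (\<Sum>j<N. prodop m (P j) y x)"
      using P(2) x y by (simp_all add: op_eq_def)
    moreover have "(\<Sum>j<N. prodop m (P j) x y) = (\<Sum>j<N. cnj (prodop m (P j) y x))"
      by (rule sum.cong[OF refl], rule prodop_herm) (use x y in auto)
    ultimately show "A x y = cnj (A y x)" by simp
  qed
qed

lemma locc_separable:
  assumes "locc m LB Out M" and fin: "\<And>k. k < m \<Longrightarrow> finite (LB k)" and "i \<in> Out"
  shows "separable m LB (M i)"
  using assms(1,3)
proof (induction rule: locc.induct)
  case (stop c M)
  have "op_eq (gbasis m LB) (M i) (if i = c then idop else (\<lambda>x y. 0))"
    using stop(2)[OF stop(3)] by (cases "i = c") (simp_all add: zeroop_def)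
  then show ?case
    by (cases "i = c") (simp_all add: separable_cong[OF _ separable_idop[OF fin]] separable_cong[OF _ separable_zero])
next
  case (round k K r Ms M)
  have "separable m LB (\<lambda>x y. \<Sum>j<r. sandwich (gbasis m LB) (lift m k (K j)) (Ms j i) x y)"
    by (intro separable_sum separable_sandwich_lift[OF fin round(1)] round.IH round.prems) auto
  then show ?case
    unfolding sandwich_def by (rule separable_cong[OF round(4)[OF round.prems]])
qed

lemma lift_sum: "lift m k (\<lambda>a b. \<Sum>j\<in>J. P j a b) x y = (\<Sum>j\<in>J. lift m k (P j) x y)"
proof -
  have "(if C then \<Sum>j\<in>J. f j else 0) = (\<Sum>j\<in>J. if C then f j else 0)" for C and f :: "_ \<Rightarrow> complex"
    by simp
  then show ?thesis unfolding lift_def by this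
qed

lemma lift_cong:
  assumes "op_eq (LB k) P Q" "x \<in> gbasis m LB" "y \<in> gbasis m LB" "k < m"
  shows "lift m k P x y = lift m k Q x y"
  using assms gbasis_memD[of _ m LB k] unfolding lift_def op_eq_def by auto

lemma locc_complete:
  assumes "locc m LB Out M" and fin: "\<And>k. k < m \<Longrightarrow> finite (LB k)" and "finite Out"
  shows "op_eq (gbasis m LB) (\<lambda>x y. \<Sum>i\<in>Out. M i x y) idop"
  using assms(1)
proof (induction rule: locc.induct)
  case (stop c M)
  then show ?case
    using \<open>finite Out\<close> by (simp add: op_eq_def zeroop_def if_distrib[of "\<lambda>A. A _ _"] cong: if_cong)
next
  case (round k K r Ms M)
  let ?G = "gbasis m LB"
  show ?case
    unfolding op_eq_def
  proof (intro ballI)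
    fix x y assume x: "x \<in> ?G" and y: "y \<in> ?G"
    have "(\<Sum>i\<in>Out. M i x y) = (\<Sum>i\<in>Out. \<Sum>j<r. sandwich ?G (lift m k (K j)) (Ms j i) x y)"
      using round(4) x y by (simp add: op_eq_def sandwich_def)
    also have "\<dots> = (\<Sum>j<r. sandwich ?G (lift m k (K j)) (\<lambda>x y. \<Sum>i\<in>Out. Ms j i x y) x y)"
      by (subst sum.swap) (simp only: sandwich_sum)
    also have "\<dots> = (\<Sum>j<r. lift m k (mmult (LB k) (adj (K j)) (K j)) x y)"
    proof (rule sum.cong[OF refl])
      fix j assume "j \<in> {..<r}"
      then have "op_eq ?G (\<lambda>x y. \<Sum>i\<in>Out. Ms j i x y) idop" using round.IH by simp
      then show "sandwich ?G (lift m k (K j)) (\<lambda>x y. \<Sum>i\<in>Out. Ms j i x y) x y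
          = lift m k (mmult (LB k) (adj (K j)) (K j)) x y"
        by (simp add: sandwich_lift_cong[OF fin round(1) x y] sandwich_lift_idop[OF fin round(1) x y])
    qed
    also have "\<dots> = idop x y"
      unfolding lift_sum[symmetric]
      using lift_cong[OF round(2) x y round(1)] lift_idop[OF x y round(1)] by simp
    finally show "(\<Sum>i\<in>Out. M i x y) = idop x y" .
  qed
qed

lemma locc_cong:
  assumes "locc m LB Out M" "\<And>i. i \<in> Out \<Longrightarrow> op_eq (gbasis m LB) (M' i) (M i)"
  shows "locc m LB Out M'"
  using assms(1)
proof (cases rule: locc.cases)
  case (stop c)
  show ?thesis
    by (rule locc.stop[OF stop(1)]) (use assms(2) stop(2) in \<open>auto simp: op_eq_def\<close>)
next
  case (round k K r Ms)
  show ?thesis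
    by (rule locc.round[OF round(1,2) round(3)]) (use assms(2) round(4) in \<open>auto simp: op_eq_def\<close>)
qed

definition rel_op :: "('i \<Rightarrow> 'i \<Rightarrow> bool) \<Rightarrow> 'i qop" where
  "rel_op R = (\<lambda>x y. if R x y then 1 else 0)"

definition basis_meas :: "('i \<Rightarrow> 'o) \<Rightarrow> 'o \<Rightarrow> 'i qop" where
  "basis_meas f i = rel_op (\<lambda>x y. x = y \<and> f x = i)"

lemma psd_basis_meas: "finite S \<Longrightarrow> psd S (basis_meas f i)"
  unfolding basis_meas_def rel_op_def by (rule psd_diagonal_indicator)

definition basis_proj :: "'a \<Rightarrow> 'a qop" where
  "basis_proj c = rel_op (\<lambda>a b. a = c \<and> b = c)"

lemma mmult_adj_basis_proj:
  assumes "finite S" "c \<in> S"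
  shows "mmult S (adj (basis_proj c)) (basis_proj c) a b = basis_proj c a b"
proof -
  have "mmult S (adj (basis_proj c)) (basis_proj c) a b = (\<Sum>z\<in>S. if z = c then basis_proj c a b else 0)"
    unfolding basis_proj_def rel_op_def mmult_def adj_def by (intro sum.cong refl) auto
  then show ?thesis using assms by simp
qed

lemma sum_basis_proj:
  assumes "finite S" "a \<in> S"
  shows "(\<Sum>c\<in>S. basis_proj c a b) = idop a b"
proof -
  have "(\<Sum>c\<in>S. basis_proj c a b) = (\<Sum>c\<in>S. if c = a then idop a b else 0)"
    unfolding basis_proj_def rel_op_def idop_def by (intro sum.cong refl) auto
  then show ?thesis using assms by simp
qed

lemma basis_proj_resolution:
  assumes S: "finite S" and e: "bij_betw e {..<r} S"
  shows "op_eq S (\<lambda>a b. \<Sum>j<r. mmult S (adj (basis_proj (e j))) (basis_proj (e j)) a b) idop"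
  unfolding op_eq_def
proof (intro ballI)
  fix a b assume a: "a \<in> S"
  have "(\<Sum>j<r. mmult S (adj (basis_proj (e j))) (basis_proj (e j)) a b) = (\<Sum>j<r. basis_proj (e j) a b)"
    using bij_betw_apply[OF e] S by (simp add: mmult_adj_basis_proj)
  also have "\<dots> = (\<Sum>c\<in>S. basis_proj c a b)"
    by (rule sum.reindex_bij_betw[OF e])
  also have "\<dots> = idop a b"
    by (rule sum_basis_proj[OF S a])
  finally show "(\<Sum>j<r. mmult S (adj (basis_proj (e j))) (basis_proj (e j)) a b) = idop a b" .
qed

lemma sandwich_lift_basis_proj:
  assumes fin: "\<And>k. k < m \<Longrightarrow> finite (LB k)" and k: "k < m"
    and x: "x \<in> gbasis m LB" and y: "y \<in> gbasis m LB" and c: "c \<in> LB k"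
  shows "sandwich (gbasis m LB) (lift m k (basis_proj c)) A x y = (if x k = c \<and> y k = c then A x y else 0)"
proof -
  let ?P = "basis_proj c"
  have "sandwich (gbasis m LB) (lift m k ?P) A x y
      = (\<Sum>a\<in>LB k. \<Sum>b\<in>LB k. cnj (?P a (x k)) * A (x(k := a)) (y(k := b)) * ?P b (y k))"
    by (rule sandwich_lift_eq[OF fin k x y])
  also have "\<dots> = (if x k = c \<and> y k = c then A x y else 0)"
  proof (cases "x k = c \<and> y k = c")
    case True
    then have "x(k := c) = x" "y(k := c) = y" by auto
    then have "(\<Sum>a\<in>LB k. \<Sum>b\<in>LB k. cnj (?P a (x k)) * A (x(k := a)) (y(k := b)) * ?P b (y k))
        = (\<Sum>a\<in>LB k. \<Sum>b\<in>LB k. if a = c then if b = c then A x y else 0 else 0)"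
      using True by (intro sum.cong refl) (auto simp: basis_proj_def rel_op_def)
    also have "\<dots> = (\<Sum>a\<in>LB k. if a = c then (\<Sum>b\<in>LB k. if b = c then A x y else 0) else 0)"
      by (intro sum.cong refl) simp
    finally show ?thesis using True c fin[OF k] by simp
  next
    case False
    then show ?thesis by (auto simp: basis_proj_def rel_op_def intro!: sum.neutral)
  qed
  finally show ?thesis .
qed

lemma locc_local_basis_measurement:
  assumes fin: "\<And>k. k < m \<Longrightarrow> finite (LB k)" and k: "k < m"
    and Ms: "\<And>a. a \<in> LB k \<Longrightarrow> locc m LB Out (Ms a)"
    and M: "\<And>i x y. i \<in> Out \<Longrightarrow> x \<in> gbasis m LB \<Longrightarrow> y \<in> gbasis m LB \<Longrightarrow>
              M i x y = (if x k = y k then Ms (x k) i x y else 0)"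
  shows "locc m LB Out M"
proof -
  let ?G = "gbasis m LB" and ?r = "card (LB k)"
  obtain e where e: "bij_betw e {..<?r} (LB k)"
    using ex_bij_betw_nat_finite[OF fin[OF k]] by (auto simp: lessThan_atLeast0)
  have reindex: "(\<Sum>j<?r. g (e j)) = (\<Sum>c\<in>LB k. g c)" for g :: "'a \<Rightarrow> complex"
    by (rule sum.reindex_bij_betw[OF e])
  show ?thesis
  proof (rule locc.round[where k = k and r = ?r and K = "\<lambda>j. basis_proj (e j)" and Ms = "\<lambda>j. Ms (e j)"])
    show "op_eq (LB k) (\<lambda>a b. \<Sum>j<?r. mmult (LB k) (adj (basis_proj (e j))) (basis_proj (e j)) a b) idop"
      by (rule basis_proj_resolution[OF fin[OF k] e])
    show "locc m LB Out (Ms (e j))" if "j < ?r" for j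
      using Ms bij_betw_apply[OF e] that by simp
    show "op_eq ?G (M i) (\<lambda>x y. \<Sum>j<?r. mmult ?G (mmult ?G (adj (lift m k (basis_proj (e j)))) (Ms (e j) i))
                                       (lift m k (basis_proj (e j))) x y)"
      if i: "i \<in> Out" for i
      unfolding op_eq_def
    proof (intro ballI)
      fix x y assume x: "x \<in> ?G" and y: "y \<in> ?G"
      have "(\<Sum>j<?r. mmult ?G (mmult ?G (adj (lift m k (basis_proj (e j)))) (Ms (e j) i)) (lift m k (basis_proj (e j))) x y)
          = (\<Sum>c\<in>LB k. if c = x k then (if x k = y k then Ms (x k) i x y else 0) else 0)"
        unfolding sandwich_def[symmetric] reindex[of "\<lambda>c. sandwich ?G (lift m k (basis_proj c)) (Ms c i) x y"]
        by (intro sum.cong refl) (auto simp: sandwich_lift_basis_proj[OF fin k x y])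
      also have "\<dots> = M i x y"
        using M[OF i x y] gbasis_memD[OF x k] fin[OF k] by simp
      finally show "M i x y = (\<Sum>j<?r. mmult ?G (mmult ?G (adj (lift m k (basis_proj (e j)))) (Ms (e j) i))
                                         (lift m k (basis_proj (e j))) x y)" ..
    qed
  qed (rule k)
qed

lemma locc_basis_meas_const:
  assumes "c \<in> Out" "\<And>x. x \<in> gbasis m LB \<Longrightarrow> f x = c"
  shows "locc m LB Out (basis_meas f)"
  by (rule locc.stop[OF assms(1)]) (auto simp: op_eq_def basis_meas_def rel_op_def idop_def zeroop_def assms(2))

lemma locc_basis_meas_prefix:
  assumes fin: "\<And>k. k < m \<Longrightarrow> finite (LB k)" and Out: "Out \<noteq> {}" and "n \<le> m"
    and "\<And>x. x \<in> gbasis m LB \<Longrightarrow> f x \<in> Out"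
    and "\<And>x y. x \<in> gbasis m LB \<Longrightarrow> y \<in> gbasis m LB \<Longrightarrow> (\<forall>j<n. x j = y j) \<Longrightarrow> f x = f y"
  shows "locc m LB Out (basis_meas f)"
  using assms(3-5)
proof (induction n arbitrary: f)
  case 0
  obtain c where c: "c \<in> Out" "\<And>x. x \<in> gbasis m LB \<Longrightarrow> f x = c"
  proof (cases "gbasis m LB = {}")
    case True
    then show ?thesis using Out that by blast
  next
    case False
    then obtain x0 where x0: "x0 \<in> gbasis m LB" by blast
    have "f x = f x0" if "x \<in> gbasis m LB" for x
      using "0.prems"(3)[OF that x0] by simp
    then show ?thesis using that[OF "0.prems"(2)[OF x0]] by blast
  qed
  then show ?case by (rule locc_basis_meas_const)
next
  case (Suc n)
  have n: "n < m" using Suc.prems(1) by simp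
  show ?case
  proof (rule locc_local_basis_measurement[OF fin n, where Ms = "\<lambda>a. basis_meas (\<lambda>x. f (x(n := a)))"])
    fix a assume a: "a \<in> LB n"
    show "locc m LB Out (basis_meas (\<lambda>x. f (x(n := a))))"
    proof (rule Suc.IH)
      show "f (x(n := a)) \<in> Out" if "x \<in> gbasis m LB" for x
        using Suc.prems(2) fun_upd_in_gbasis[OF that n a] .
      show "f (x(n := a)) = f (y(n := a))"
        if "x \<in> gbasis m LB" "y \<in> gbasis m LB" "\<forall>j<n. x j = y j" for x y
      proof -
        have "\<forall>j<Suc n. (x(n := a)) j = (y(n := a)) j" using that(3) by (simp add: less_Suc_eq)
        then show ?thesis
          using Suc.prems(3)[OF fun_upd_in_gbasis[OF that(1) n a] fun_upd_in_gbasis[OF that(2) n a]] by blast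
      qed
    qed (use n in simp)
  next
    fix i x y
    show "basis_meas f i x y = (if x n = y n then basis_meas (\<lambda>z. f (z(n := x n))) i x y else 0)"
      by (auto simp: basis_meas_def rel_op_def)
  qed
qed

lemma locc_basis_meas:
  assumes "\<And>k. k < m \<Longrightarrow> finite (LB k)" "Out \<noteq> {}" "\<And>x. x \<in> gbasis m LB \<Longrightarrow> f x \<in> Out"
  shows "locc m LB Out (basis_meas f)"
proof (rule locc_basis_meas_prefix[OF assms(1,2) order.refl assms(3)])
  fix x y assume "x \<in> gbasis m LB" "y \<in> gbasis m LB" "\<forall>j<m. x j = y j"
  then have "x = y" by (intro gbasis_eqI) auto
  then show "f x = f y" by simp
qed

lemma tr_mmult_basis_meas_right:
  assumes "finite S"
  shows "tr S (mmult S A (basis_meas f i)) = (\<Sum>x\<in>S. if f x = i then A x x else 0)"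
proof -
  have "(\<Sum>z\<in>S. A x z * basis_meas f i z x) = (\<Sum>z\<in>S. if z = x then (if f x = i then A x x else 0) else 0)" for x
    by (intro sum.cong refl) (auto simp: basis_meas_def rel_op_def)
  then show ?thesis using assms by (simp add: tr_def mmult_def)
qed

lemma tr_mmult_basis_meas_left:
  assumes "finite S"
  shows "tr S (mmult S (basis_meas f i) A) = (\<Sum>x\<in>S. if f x = i then A x x else 0)"
proof -
  have "(\<Sum>z\<in>S. basis_meas f i x z * A z x) = (\<Sum>z\<in>S. if z = x then (if f x = i then A x x else 0) else 0)" for x
    by (intro sum.cong refl) (auto simp: basis_meas_def rel_op_def)
  then show ?thesis using assms by (simp add: tr_def mmult_def)
qed

lemma succ_prob_basis_meas:
  assumes "finite S" "finite Out" "\<And>x. x \<in> S \<Longrightarrow> f x \<in> Out"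
    and diag: "\<And>x. x \<in> S \<Longrightarrow> \<eta> (f x) * Re (\<rho> (f x) x x) = h"
  shows "succ_prob S Out \<eta> \<rho> (basis_meas f) = h * card S"
proof -
  have "succ_prob S Out \<eta> \<rho> (basis_meas f) = (\<Sum>i\<in>Out. \<Sum>x\<in>S. if f x = i then \<eta> i * Re (\<rho> i x x) else 0)"
    unfolding succ_prob_def tr_mmult_basis_meas_right[OF assms(1)]
    by (simp add: Re_sum sum_distrib_left if_distrib[of Re] if_distrib[of "\<lambda>c. _ * c"] cong: if_cong)
  also have "\<dots> = (\<Sum>x\<in>S. \<eta> (f x) * Re (\<rho> (f x) x x))"
    by (subst sum.swap) (simp add: assms(2,3) eq_commute[of "f _"])
  also have "\<dots> = h * card S"
    using diag by simp
  finally show ?thesis .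
qed

lemma sep_meas_basis_meas:
  assumes fin: "\<And>k. k < m \<Longrightarrow> finite (LB k)" and Out: "finite Out" "Out \<noteq> {}"
    and f: "\<And>x. x \<in> gbasis m LB \<Longrightarrow> f x \<in> Out"
  shows "sep_meas m LB Out (basis_meas f)"
proof -
  have "finite (gbasis m LB)" by (rule finite_gbasis[OF fin])
  moreover have "locc m LB Out (basis_meas f)" by (rule locc_basis_meas[OF fin Out(2) f])
  ultimately show ?thesis
    unfolding sep_meas_def povm_def
    by (intro conjI ballI psd_basis_meas locc_complete[OF _ fin Out(1)] locc_separable[OF _ fin])
qed

section \<open>An upper bound for separable measurements\<close>

definition swap_injective :: "nat \<Rightarrow> (nat \<Rightarrow> 'b set) \<Rightarrow> nat \<Rightarrow> ((nat \<Rightarrow> 'b) \<Rightarrow> (nat \<Rightarrow> 'b) \<Rightarrow> bool) \<Rightarrow> bool" where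
  "swap_injective m LB k R \<longleftrightarrow>
     inj_on (\<lambda>(x, y). x(k := y k)) {(x, y). x \<in> gbasis m LB \<and> y \<in> gbasis m LB \<and> R x y}"

lemma Re_prodop_diag:
  assumes psdP: "\<And>j. j < m \<Longrightarrow> psd (LB j) (P j)" and z: "z \<in> gbasis m LB"
  shows "Re (prodop m P z z) = (\<Prod>j<m. Re (P j (z j) (z j)))"
proof -
  have "prodop m P z z = (\<Prod>j<m. of_real (Re (P j (z j) (z j))))"
    unfolding prodop_def by (intro prod.cong refl, rule psd_diag_real[OF psdP gbasis_memD[OF z]]) auto
  then show ?thesis by (simp del: of_real_prod add: of_real_prod[symmetric])
qed

lemma Re_prodop_diag_nonneg:
  assumes fin: "\<And>k. k < m \<Longrightarrow> finite (LB k)" and psdP: "\<And>j. j < m \<Longrightarrow> psd (LB j) (P j)"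
    and z: "z \<in> gbasis m LB"
  shows "0 \<le> Re (prodop m P z z)"
proof -
  have "0 \<le> (\<Prod>j<m. Re (P j (z j) (z j)))"
    by (intro prod_nonneg) (simp add: psd_diag_nonneg[OF psdP fin gbasis_memD[OF z]])
  then show ?thesis by (simp add: Re_prodop_diag[OF psdP z])
qed

lemma cmod_prodop_le:
  assumes fin: "\<And>k. k < m \<Longrightarrow> finite (LB k)" and k: "k < m"
    and psdP: "\<And>j. j < m \<Longrightarrow> psd (LB j) (P j)"
    and x: "x \<in> gbasis m LB" and y: "y \<in> gbasis m LB"
  shows "cmod (prodop m P y x)
       \<le> (Re (prodop m P (x(k := y k)) (x(k := y k))) + Re (prodop m P (y(k := x k)) (y(k := x k)))) / 2"
proof -
  let ?p = "\<lambda>j a. Re (P j a a)"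
  define a b where "a = Re (prodop m P (x(k := y k)) (x(k := y k)))"
    and "b = Re (prodop m P (y(k := x k)) (y(k := x k)))"
  have xy: "x(k := y k) \<in> gbasis m LB" "y(k := x k) \<in> gbasis m LB"
    using fun_upd_in_gbasis[OF x k gbasis_memD[OF y k]] fun_upd_in_gbasis[OF y k gbasis_memD[OF x k]] .
  have "(cmod (prodop m P y x))\<^sup>2 = (\<Prod>j<m. (cmod (P j (y j) (x j)))\<^sup>2)"
    unfolding prodop_def prod_norm[symmetric] prod_power_distrib ..
  also have "\<dots> \<le> (\<Prod>j<m. ?p j ((x(k := y k)) j) * ?p j ((y(k := x k)) j))"
  proof (rule prod_mono)
    fix j assume "j \<in> {..<m}"
    then have j: "j < m" by simp
    have "(cmod (P j (y j) (x j)))\<^sup>2 \<le> ?p j (y j) * ?p j (x j)"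
      by (rule psd_cauchy_schwarz[OF psdP[OF j] fin[OF j] gbasis_memD[OF y j] gbasis_memD[OF x j]])
    then show "0 \<le> (cmod (P j (y j) (x j)))\<^sup>2 \<and>
        (cmod (P j (y j) (x j)))\<^sup>2 \<le> ?p j ((x(k := y k)) j) * ?p j ((y(k := x k)) j)"
      by (cases "j = k") (simp_all add: mult.commute)
  qed
  also have "\<dots> = a * b"
    by (simp only: a_def b_def Re_prodop_diag[OF psdP xy(1)] Re_prodop_diag[OF psdP xy(2)] prod.distrib)
  finally have "cmod (prodop m P y x) \<le> sqrt (a * b)"
    by (rule real_le_rsqrt)
  also have "\<dots> \<le> (a + b) / 2"
    unfolding a_def b_def by (intro arith_geo_mean_sqrt Re_prodop_diag_nonneg[OF fin psdP] xy)
  finally show ?thesis unfolding a_def b_def .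
qed

lemma Re_tr_rel_op_prodop_le:
  assumes fin: "\<And>k. k < m \<Longrightarrow> finite (LB k)" and k: "k < m"
    and psdP: "\<And>j. j < m \<Longrightarrow> psd (LB j) (P j)"
    and sym: "\<And>x y. R x y \<Longrightarrow> R y x" and inj: "swap_injective m LB k R"
  shows "Re (tr (gbasis m LB) (mmult (gbasis m LB) (rel_op R) (prodop m P))) \<le> Re (tr (gbasis m LB) (prodop m P))"
proof -
  (* Each off-diagonal entry is charged to two diagonal entries (cmod_prodop_le); by swap
     injectivity no diagonal entry is charged twice from the first slot, and by symmetry of R
     the second slot is a reindexing of the first. *)
  let ?G = "gbasis m LB"
  let ?S = "{(x, y). x \<in> ?G \<and> y \<in> ?G \<and> R x y}"
  let ?q = "\<lambda>z. Re (prodop m P z z)"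
  let ?\<alpha> = "\<lambda>(x, y). x(k := y k)"
  have finG: "finite ?G" by (rule finite_gbasis[OF fin])
  have \<alpha>: "?\<alpha> ` ?S \<subseteq> ?G"
    using fun_upd_in_gbasis gbasis_memD k by fastforce
  have swap: "bij_betw prod.swap ?S ?S"
    by (rule bij_betwI[of _ _ _ prod.swap]) (auto intro: sym)
  have "Re (tr ?G (mmult ?G (rel_op R) (prodop m P)))
      = (\<Sum>p\<in>?G \<times> ?G. if p \<in> {(x, y). R x y} then Re (prodop m P (snd p) (fst p)) else 0)"
    unfolding tr_def mmult_def rel_op_def sum.cartesian_product Re_sum by (intro sum.cong refl) auto
  also have "\<dots> = (\<Sum>p\<in>?S. Re (prodop m P (snd p) (fst p)))"
    by (subst sum.inter_restrict[symmetric]) (auto simp: finG intro: sum.cong)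
  also have "\<dots> \<le> (\<Sum>p\<in>?S. (?q (?\<alpha> p) + ?q (?\<alpha> (prod.swap p))) / 2)"
  proof (rule sum_mono)
    fix p assume "p \<in> ?S"
    then obtain x y where p: "p = (x, y)" "x \<in> ?G" "y \<in> ?G" by auto
    then show "Re (prodop m P (snd p) (fst p)) \<le> (?q (?\<alpha> p) + ?q (?\<alpha> (prod.swap p))) / 2"
      using complex_Re_le_cmod[of "prodop m P y x"] cmod_prodop_le[OF fin k psdP p(2,3)] by simp
  qed
  also have "\<dots> = ((\<Sum>p\<in>?S. ?q (?\<alpha> p)) + (\<Sum>p\<in>?S. ?q (?\<alpha> (prod.swap p)))) / 2"
    by (simp only: sum_divide_distrib[symmetric] sum.distrib)
  also have "\<dots> = (\<Sum>p\<in>?S. ?q (?\<alpha> p))"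
    by (simp only: sum.reindex_bij_betw[OF swap, of "\<lambda>p. ?q (?\<alpha> p)"]) simp
  also have "\<dots> = (\<Sum>z\<in>?\<alpha> ` ?S. ?q z)"
    using inj unfolding swap_injective_def by (simp add: sum.reindex)
  also have "\<dots> \<le> (\<Sum>z\<in>?G. ?q z)"
    using \<alpha> by (intro sum_mono2 finG Re_prodop_diag_nonneg[OF fin psdP]) auto
  also have "\<dots> = Re (tr ?G (prodop m P))"
    unfolding tr_def Re_sum ..
  finally show ?thesis .
qed

lemma Re_tr_rel_op_le:
  assumes fin: "\<And>k. k < m \<Longrightarrow> finite (LB k)" and k: "k < m"
    and sym: "\<And>x y. R x y \<Longrightarrow> R y x" and inj: "swap_injective m LB k R" and A: "separable m LB A"
  shows "Re (tr (gbasis m LB) (mmult (gbasis m LB) (rel_op R) A)) \<le> Re (tr (gbasis m LB) A)"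
proof -
  let ?G = "gbasis m LB"
  obtain N :: nat and P where P: "\<forall>j<N. \<forall>k<m. psd (LB k) (P j k)"
      "op_eq ?G A (\<lambda>x y. \<Sum>j<N. prodop m (P j) x y)"
    using A unfolding separable_def by auto
  have "Re (tr ?G (mmult ?G (rel_op R) A)) = (\<Sum>j<N. Re (tr ?G (mmult ?G (rel_op R) (prodop m (P j)))))"
    by (simp add: tr_mmult_cong_right[OF P(2)] tr_mmult_sum_right Re_sum)
  also have "\<dots> \<le> (\<Sum>j<N. Re (tr ?G (prodop m (P j))))"
    using P(1) by (intro sum_mono Re_tr_rel_op_prodop_le[OF fin k _ sym inj]) auto
  also have "\<dots> = Re (tr ?G A)"
    by (simp add: tr_cong[OF P(2)] tr_sum Re_sum)
  finally show ?thesis .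
qed

lemma sep_dual_scaled_complement:
  assumes fin: "\<And>k. k < m \<Longrightarrow> finite (LB k)" and k: "k < m"
    and sym: "\<And>x y. R x y \<Longrightarrow> R y x" and inj: "swap_injective m LB k R" and h: "0 \<le> h"
    and T: "\<And>x y. x \<in> gbasis m LB \<Longrightarrow> y \<in> gbasis m LB \<Longrightarrow> T x y = of_real h * rel_op R x y"
  shows "sep_dual m LB (\<lambda>x y. of_real h * idop x y - T x y)"
  unfolding sep_dual_def
proof (intro conjI allI impI)
  let ?G = "gbasis m LB"
  let ?E = "\<lambda>x y. of_real h * idop x y - T x y"
  show herm: "herm ?G ?E"
    unfolding herm_def using T sym by (auto simp: idop_def rel_op_def)
  fix \<sigma> assume "sep_state m LB \<sigma>"
  then have sep: "separable m LB \<sigma>" unfolding sep_state_def by blast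
  show "Im (tr ?G (mmult ?G ?E \<sigma>)) = 0"
    by (rule tr_mmult_hermitian_real[OF herm separable_hermitian[OF sep]])
  have "tr ?G (mmult ?G ?E \<sigma>) = tr ?G (mmult ?G (\<lambda>x y. of_real h * idop x y - of_real h * rel_op R x y) \<sigma>)"
    by (rule tr_mmult_cong_left) (simp add: T)
  also have "\<dots> = of_real h * tr ?G \<sigma> - of_real h * tr ?G (mmult ?G (rel_op R) \<sigma>)"
    by (simp only: tr_mmult_diff_left tr_mmult_scale_left tr_mmult_idop_left[OF finite_gbasis[OF fin]])
  finally have "tr ?G (mmult ?G ?E \<sigma>) = of_real h * tr ?G \<sigma> - of_real h * tr ?G (mmult ?G (rel_op R) \<sigma>)" .
  then show "0 \<le> Re (tr ?G (mmult ?G ?E \<sigma>))"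
    using Re_tr_rel_op_le[OF fin k sym inj sep] h by (simp add: right_diff_distrib[symmetric])
qed

lemma succ_prob_le:
  assumes fin: "\<And>k. k < m \<Longrightarrow> finite (LB k)" and k: "k < m"
    and sep: "\<And>i. i \<in> Out \<Longrightarrow> separable m LB (M i)"
    and complete: "op_eq (gbasis m LB) (\<lambda>x y. \<Sum>i\<in>Out. M i x y) idop"
    and weighted: "\<And>i x y. i \<in> Out \<Longrightarrow> x \<in> gbasis m LB \<Longrightarrow> y \<in> gbasis m LB \<Longrightarrow>
                     of_real (\<eta> i) * \<rho> i x y = of_real h * rel_op (R i) x y"
    and sym: "\<And>i x y. R i x y \<Longrightarrow> R i y x" and inj: "\<And>i. i \<in> Out \<Longrightarrow> swap_injective m LB k (R i)"
    and h: "0 \<le> h"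
  shows "succ_prob (gbasis m LB) Out \<eta> \<rho> M \<le> h * card (gbasis m LB)"
proof -
  let ?G = "gbasis m LB"
  have "\<eta> i * Re (tr ?G (mmult ?G (\<rho> i) (M i))) = h * Re (tr ?G (mmult ?G (rel_op (R i)) (M i)))"
    if i: "i \<in> Out" for i
  proof -
    have "of_real (\<eta> i) * tr ?G (mmult ?G (\<rho> i) (M i)) = of_real h * tr ?G (mmult ?G (rel_op (R i)) (M i))"
      unfolding tr_mmult_scale_left[symmetric] by (rule tr_mmult_cong_left) (rule weighted[OF i])
    from arg_cong[OF this, of Re] show ?thesis by simp
  qed
  then have "succ_prob ?G Out \<eta> \<rho> M = (\<Sum>i\<in>Out. h * Re (tr ?G (mmult ?G (rel_op (R i)) (M i))))"
    unfolding succ_prob_def by simp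
  also have "\<dots> \<le> (\<Sum>i\<in>Out. h * Re (tr ?G (M i)))"
    by (intro sum_mono mult_left_mono h Re_tr_rel_op_le[OF fin k sym inj sep])
  also have "\<dots> = h * Re (tr ?G (\<lambda>x y. \<Sum>i\<in>Out. M i x y))"
    by (simp add: tr_sum Re_sum sum_distrib_left)
  also have "\<dots> = h * card ?G"
    by (simp add: tr_cong[OF complete] tr_idop)
  finally show ?thesis .
qed

lemma p_locc_p_sep_eq:
  assumes fin: "\<And>k. k < m \<Longrightarrow> finite (LB k)" and k: "k < m"
    and Out: "finite Out" "Out \<noteq> {}" and f: "\<And>x. x \<in> gbasis m LB \<Longrightarrow> f x \<in> Out"
    and weighted: "\<And>i x y. i \<in> Out \<Longrightarrow> x \<in> gbasis m LB \<Longrightarrow> y \<in> gbasis m LB \<Longrightarrow>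
                     of_real (\<eta> i) * \<rho> i x y = of_real h * rel_op (R i) x y"
    and sym: "\<And>i x y. R i x y \<Longrightarrow> R i y x" and inj: "\<And>i. i \<in> Out \<Longrightarrow> swap_injective m LB k (R i)"
    and h: "0 \<le> h" and diag: "\<And>x. x \<in> gbasis m LB \<Longrightarrow> R (f x) x x"
  shows "p_locc m LB Out \<eta> \<rho> = h * card (gbasis m LB) \<and> p_sep m LB Out \<eta> \<rho> = h * card (gbasis m LB)"
proof -
  let ?G = "gbasis m LB" and ?D = "basis_meas f"
  have finG: "finite ?G" by (rule finite_gbasis[OF fin])
  have "\<eta> (f x) * Re (\<rho> (f x) x x) = h" if "x \<in> ?G" for x
    using arg_cong[OF weighted[OF f[OF that] that that], of Re] diag[OF that] by (simp add: rel_op_def)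
  then have opt: "succ_prob ?G Out \<eta> \<rho> ?D = h * card ?G"
    using succ_prob_basis_meas[of ?G Out f \<eta> \<rho> h] finG Out(1) f by blast
  have upper: "succ_prob ?G Out \<eta> \<rho> M \<le> h * card ?G"
    if "\<And>i. i \<in> Out \<Longrightarrow> separable m LB (M i)" "op_eq ?G (\<lambda>x y. \<Sum>i\<in>Out. M i x y) idop" for M
    by (rule succ_prob_le[OF fin k that weighted sym inj h])
  have upper_locc: "succ_prob ?G Out \<eta> \<rho> M \<le> h * card ?G" if M: "locc m LB Out M" for M
  proof (rule upper)
    show "separable m LB (M i)" if "i \<in> Out" for i by (rule locc_separable[OF M fin that])
    show "op_eq ?G (\<lambda>x y. \<Sum>i\<in>Out. M i x y) idop" by (rule locc_complete[OF M fin Out(1)])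
  qed
  have upper_sep: "succ_prob ?G Out \<eta> \<rho> M \<le> h * card ?G" if "sep_meas m LB Out M" for M
    using that unfolding sep_meas_def povm_def by (intro upper) auto
  have locc: "locc m LB Out ?D" by (rule locc_basis_meas[OF fin Out(2) f])
  have sep_meas: "sep_meas m LB Out ?D" by (rule sep_meas_basis_meas[OF fin Out f])
  have "p_locc m LB Out \<eta> \<rho> = h * card ?G"
    unfolding p_locc_def using locc opt upper_locc by (intro cSup_eq_maximum) (auto intro!: exI[of _ ?D])
  moreover have "p_sep m LB Out \<eta> \<rho> = h * card ?G"
    unfolding p_sep_def using sep_meas opt upper_sep by (intro cSup_eq_maximum) (auto intro!: exI[of _ ?D])
  ultimately show ?thesis ..
qed

section \<open>The single-copy ensemble\<close>

definition all_equal :: "nat \<Rightarrow> (nat \<Rightarrow> nat) \<Rightarrow> bool" where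
  "all_equal m x \<longleftrightarrow> (\<forall>k<m. x k = x 0)"

definition ens_rel :: "nat \<Rightarrow> nat \<Rightarrow> nat \<Rightarrow> (nat \<Rightarrow> nat) \<Rightarrow> (nat \<Rightarrow> nat) \<Rightarrow> bool" where
  "ens_rel m d i x y \<longleftrightarrow>
     (if 1 \<le> i \<and> i \<le> d then x = y \<and> all_equal m x \<and> x 0 = i - 1
      else if i = d + 1 then x = y \<and> \<not> all_equal m x
      else all_equal m x \<and> all_equal m y)"

definition guess :: "nat \<Rightarrow> nat \<Rightarrow> (nat \<Rightarrow> nat) \<Rightarrow> nat" where
  "guess m d x = (if all_equal m x then x 0 + 1 else d + 1)"

lemma finite_qudit_LB: "finite (qudit_LB d k)"
  unfolding qudit_LB_def by simp

lemma card_qudit_gbasis: "card (gbasis m (qudit_LB d)) = d ^ m"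
  unfolding gbasis_def qudit_LB_def by (simp add: card_PiE)

lemma qudit_gbasis_lt: "x \<in> gbasis m (qudit_LB d) \<Longrightarrow> k < m \<Longrightarrow> x k < d"
  using gbasis_memD[of x m "qudit_LB d" k] unfolding qudit_LB_def by simp

lemma all_equal_iff: "0 < m \<Longrightarrow> (\<forall>k<m. x k = j) \<longleftrightarrow> all_equal m x \<and> x 0 = j"
  unfolding all_equal_def by auto

lemma Psi_eq:
  assumes x: "x \<in> gbasis m (qudit_LB d)" and y: "y \<in> gbasis m (qudit_LB d)" and m: "0 < m"
  shows "Psi m j x y = (if x = y \<and> all_equal m x \<and> x 0 = j then 1 else 0)"
  using gbasis_eqI[OF x y] unfolding Psi_def all_equal_iff[OF m] by (auto simp: all_equal_def)

lemma sum_Psi_eq: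
  assumes x: "x \<in> gbasis m (qudit_LB d)" and y: "y \<in> gbasis m (qudit_LB d)" and m: "0 < m"
  shows "(\<Sum>j<d. Psi m j x y) = (if x = y \<and> all_equal m x then 1 else 0)"
proof -
  have "(\<Sum>j<d. Psi m j x y) = (\<Sum>j<d. if j = x 0 then (if x = y \<and> all_equal m x then 1 else 0) else 0)"
    by (intro sum.cong refl) (auto simp: Psi_eq[OF x y m])
  then show ?thesis using qudit_gbasis_lt[OF x m] by simp
qed

lemma Phi_eq:
  assumes x: "x \<in> gbasis m (qudit_LB d)" and y: "y \<in> gbasis m (qudit_LB d)" and m: "0 < m"
  shows "Phi m d x y = (if all_equal m x \<and> all_equal m y then 1 else 0) / of_real (real d)"
proof -
  have "(\<Sum>i<d. \<Sum>j<d. if (\<forall>k<m. x k = i) \<and> (\<forall>k<m. y k = j) then (1::complex) else 0)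
      = (\<Sum>i<d. if i = x 0 then (\<Sum>j<d. if j = y 0 then (if all_equal m x \<and> all_equal m y then 1 else 0) else 0) else 0)"
    by (intro sum.cong refl) (auto simp: all_equal_iff[OF m])
  also have "\<dots> = (if all_equal m x \<and> all_equal m y then 1 else 0)"
    using qudit_gbasis_lt[OF x m] qudit_gbasis_lt[OF y m] by simp
  finally show ?thesis unfolding Phi_def by simp
qed

lemma of_real_divide_mult_cancel:
  "p \<noteq> 0 \<Longrightarrow> of_real (p / q) * (z / of_real p) = of_real (1 / q) * (z :: complex)"
  by (simp add: field_simps)

lemma ens_weighted_eq:
  assumes x: "x \<in> gbasis m (qudit_LB d)" and y: "y \<in> gbasis m (qudit_LB d)"
    and m: "1 < m" and d: "2 \<le> d" and i: "i \<in> {1..d+2}"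
  shows "of_real (ens_eta m d i) * ens_rho m d i x y = of_real (1 / (real d ^ m + real d)) * rel_op (ens_rel m d i) x y"
proof -
  have m0: "0 < m" using m by simp
  consider "1 \<le> i \<and> i \<le> d" | "i = d + 1" | "i = d + 2" using i by force
  then show ?thesis
  proof cases
    case 1
    then show ?thesis by (simp add: ens_eta_def ens_rho_def ens_rel_def rel_op_def Psi_eq[OF x y m0])
  next
    case 2
    have "real d ^ 1 < real d ^ m" using m d by (intro power_strict_increasing) auto
    then have "real d ^ m - real d \<noteq> 0" by simp
    moreover have "idop x y - (\<Sum>j<d. Psi m j x y) = rel_op (ens_rel m d i) x y"
      using 2 by (auto simp: sum_Psi_eq[OF x y m0] idop_def ens_rel_def rel_op_def)
    ultimately show ?thesis
      using 2 of_real_divide_mult_cancel by (simp add: ens_eta_def ens_rho_def)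
  next
    case 3
    have "real d \<noteq> 0" using d by simp
    moreover have "(if all_equal m x \<and> all_equal m y then 1 else 0) = rel_op (ens_rel m d i) x y"
      using 3 by (simp add: ens_rel_def rel_op_def)
    ultimately show ?thesis
      using 3 of_real_divide_mult_cancel by (simp add: ens_eta_def ens_rho_def Phi_eq[OF x y m0])
  qed
qed

lemma guess_mem: "x \<in> gbasis m (qudit_LB d) \<Longrightarrow> 0 < m \<Longrightarrow> guess m d x \<in> {1..d+2}"
  using qudit_gbasis_lt[of x m d 0] unfolding guess_def by auto

lemma ens_rel_guess: "x \<in> gbasis m (qudit_LB d) \<Longrightarrow> 0 < m \<Longrightarrow> ens_rel m d (guess m d x) x x"
  using qudit_gbasis_lt[of x m d 0] unfolding guess_def ens_rel_def by auto

lemma ens_rel_sym: "ens_rel m d i x y \<Longrightarrow> ens_rel m d i y x"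
  unfolding ens_rel_def by (auto split: if_splits)

lemma meas_M_eq:
  assumes x: "x \<in> gbasis m (qudit_LB d)" and y: "y \<in> gbasis m (qudit_LB d)"
    and m: "0 < m" and i: "i \<in> {1..d+2}"
  shows "meas_M m d i x y = basis_meas (guess m d) i x y"
proof -
  consider "1 \<le> i \<and> i \<le> d" | "i = d + 1" | "i = d + 2" using i by force
  then show ?thesis
    using qudit_gbasis_lt[OF x m]
    by cases (auto simp: meas_M_def guess_def basis_meas_def rel_op_def zeroop_def idop_def
        Psi_eq[OF x y m] sum_Psi_eq[OF x y m])
qed

lemma swap_injective_ens_rel:
  assumes m: "1 < m"
  shows "swap_injective m (qudit_LB d) 1 (ens_rel m d i)"
  unfolding swap_injective_def
proof (rule inj_onI, clarify)
  fix x y x' y'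
  assume x: "x \<in> gbasis m (qudit_LB d)" and y: "y \<in> gbasis m (qudit_LB d)"
    and x': "x' \<in> gbasis m (qudit_LB d)" and y': "y' \<in> gbasis m (qudit_LB d)"
    and R: "ens_rel m d i x y" and R': "ens_rel m d i x' y'" and eq: "x(1 := y 1) = x'(1 := y' 1)"
  show "x = x' \<and> y = y'"
  proof (cases "(1 \<le> i \<and> i \<le> d) \<or> i = d + 1")
    case True
    then have "x = y" "x' = y'" using R R' unfolding ens_rel_def by (auto split: if_splits)
    then show ?thesis using eq by simp
  next
    case False
    (* GHZ outcome: x and y are constant, so x is determined by its party 0 and y by its
       party 1, and both coordinates survive in x(1 := y 1). *)
    then have "ens_rel m d i u v \<longleftrightarrow> all_equal m u \<and> all_equal m v" for u v
      unfolding ens_rel_def by auto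
    then have c: "all_equal m x" "all_equal m y" "all_equal m x'" "all_equal m y'"
      using R R' by simp_all
    have "x 0 = x' 0" "y 1 = y' 1" using fun_cong[OF eq, of 0] fun_cong[OF eq, of 1] by simp_all
    have "x = x'"
    proof (rule gbasis_eqI[OF x x'])
      fix k assume "k < m"
      then have "x k = x 0" "x' k = x' 0" using c(1,3) unfolding all_equal_def by blast+
      then show "x k = x' k" using \<open>x 0 = x' 0\<close> by simp
    qed
    moreover have "y = y'"
    proof (rule gbasis_eqI[OF y y'])
      fix k assume "k < m"
      then have "y k = y 0" "y 1 = y 0" "y' k = y' 0" "y' 1 = y' 0"
        using c(2,4) m unfolding all_equal_def by blast+
      then show "y k = y' k" using \<open>y 1 = y' 1\<close> by simp
    qed
    ultimately show ?thesis ..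
  qed
qed

lemma locc_meas_M:
  assumes m: "0 < m"
  shows "locc m (qudit_LB d) {1..d+2} (meas_M m d)"
proof (rule locc_cong[OF locc_basis_meas[where LB = "qudit_LB d" and Out = "{1..d+2}" and f = "guess m d"]])
  show "guess m d x \<in> {1..d+2}" if "x \<in> gbasis m (qudit_LB d)" for x
    by (rule guess_mem[OF that m])
  show "op_eq (gbasis m (qudit_LB d)) (meas_M m d i) (basis_meas (guess m d) i)" if "i \<in> {1..d+2}" for i
    using meas_M_eq[OF _ _ m that] by (simp add: op_eq_def)
qed (simp_all add: finite_qudit_LB)

section \<open>Sequences of copies\<close>

lemma prod_indicator: "(\<Prod>l<(L::nat). if P l then (1::complex) else 0) = (if \<forall>l<L. P l then 1 else 0)"
  by (induction L) (auto simp: less_Suc_eq)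

lemma finite_seq_LB: "finite (seq_LB d L k)"
  unfolding seq_LB_def by (simp add: finite_PiE)

lemma card_seq_gbasis: "card (gbasis m (seq_LB d L)) = (d ^ L) ^ m"
  unfolding gbasis_def seq_LB_def by (simp add: card_PiE)

lemma copy_of_mem:
  assumes "X \<in> gbasis m (seq_LB d L)" "l < L"
  shows "copy_of m l X \<in> gbasis m (qudit_LB d)"
  using gbasis_memD[OF assms(1)] assms(2)
  unfolding gbasis_def qudit_LB_def seq_LB_def copy_of_def by (auto simp: PiE_iff extensional_def)

lemma seq_gbasis_eq_iff:
  assumes X: "X \<in> gbasis m (seq_LB d L)" and Y: "Y \<in> gbasis m (seq_LB d L)"
  shows "X = Y \<longleftrightarrow> (\<forall>l<L. copy_of m l X = copy_of m l Y)"
proof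
  assume copies: "\<forall>l<L. copy_of m l X = copy_of m l Y"
  show "X = Y"
  proof (rule gbasis_eqI[OF X Y])
    fix k assume k: "k < m"
    have "X k \<in> PiE {..<L} (\<lambda>_. {..<d})" "Y k \<in> PiE {..<L} (\<lambda>_. {..<d})"
      using gbasis_memD[OF X k] gbasis_memD[OF Y k] unfolding seq_LB_def by simp_all
    moreover have "X k l = Y k l" if "l < L" for l
      using fun_cong[OF copies[rule_format, OF that], of k] k by (simp add: copy_of_def)
    ultimately show "X k = Y k" by (auto intro: PiE_ext)
  qed
qed simp

lemma copy_of_fun_upd: "k < m \<Longrightarrow> copy_of m l (X(k := Y k)) = (copy_of m l X)(k := copy_of m l Y k)"
  unfolding copy_of_def by (auto simp: fun_eq_iff)

definition seq_rel :: "nat \<Rightarrow> nat \<Rightarrow> (nat \<Rightarrow> (nat \<Rightarrow> nat) \<Rightarrow> (nat \<Rightarrow> nat) \<Rightarrow> bool) \<Rightarrow> (nat \<Rightarrow> nat)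
    \<Rightarrow> (nat \<Rightarrow> nat \<Rightarrow> nat) \<Rightarrow> (nat \<Rightarrow> nat \<Rightarrow> nat) \<Rightarrow> bool" where
  "seq_rel m L R c X Y \<longleftrightarrow> (\<forall>l<L. R (c l) (copy_of m l X) (copy_of m l Y))"

lemma seq_op_rel_op:
  assumes c: "\<And>l. l < L \<Longrightarrow> c l \<in> I"
    and A: "\<And>i x y. i \<in> I \<Longrightarrow> x \<in> gbasis m (qudit_LB d) \<Longrightarrow> y \<in> gbasis m (qudit_LB d) \<Longrightarrow>
              A i x y = of_real h * rel_op (R i) x y"
    and X: "X \<in> gbasis m (seq_LB d L)" and Y: "Y \<in> gbasis m (seq_LB d L)"
  shows "seq_op m L A c X Y = of_real (h ^ L) * rel_op (seq_rel m L R c) X Y"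
proof -
  have "seq_op m L A c X Y = (\<Prod>l<L. of_real h * (if R (c l) (copy_of m l X) (copy_of m l Y) then 1 else 0))"
    unfolding seq_op_def by (intro prod.cong refl) (simp add: A c copy_of_mem[OF X] copy_of_mem[OF Y] rel_op_def)
  then show ?thesis
    by (simp add: prod.distrib prod_indicator seq_rel_def rel_op_def)
qed

lemma seq_eta_mult_seq_op:
  "of_real (seq_eta \<eta> L c) * seq_op m L A c X Y = seq_op m L (\<lambda>i x y. of_real (\<eta> i) * A i x y) c X Y"
  unfolding seq_eta_def seq_op_def by (simp add: prod.distrib)

lemma seq_rel_sym: "(\<And>i x y. R i x y \<Longrightarrow> R i y x) \<Longrightarrow> seq_rel m L R c X Y \<Longrightarrow> seq_rel m L R c Y X"
  unfolding seq_rel_def by blast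

lemma swap_injective_seq_rel:
  assumes k: "k < m" and inj: "\<And>l. l < L \<Longrightarrow> swap_injective m (qudit_LB d) k (R (c l))"
  shows "swap_injective m (seq_LB d L) k (seq_rel m L R c)"
  unfolding swap_injective_def
proof (rule inj_onI, clarify)
  fix X Y X' Y'
  assume X: "X \<in> gbasis m (seq_LB d L)" and Y: "Y \<in> gbasis m (seq_LB d L)"
    and X': "X' \<in> gbasis m (seq_LB d L)" and Y': "Y' \<in> gbasis m (seq_LB d L)"
    and R: "seq_rel m L R c X Y" and R': "seq_rel m L R c X' Y'" and eq: "X(k := Y k) = X'(k := Y' k)"
  have "copy_of m l X = copy_of m l X' \<and> copy_of m l Y = copy_of m l Y'" if l: "l < L" for l
  proof -
    have "(copy_of m l X)(k := copy_of m l Y k) = (copy_of m l X')(k := copy_of m l Y' k)"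
      using arg_cong[OF eq, of "copy_of m l"] by (simp add: copy_of_fun_upd[OF k])
    then have "(copy_of m l X, copy_of m l Y) = (copy_of m l X', copy_of m l Y')"
      using R R' l copy_of_mem[OF X l] copy_of_mem[OF Y l] copy_of_mem[OF X' l] copy_of_mem[OF Y' l]
      by (intro inj_onD[OF inj[OF l, unfolded swap_injective_def]]) (auto simp: seq_rel_def)
    then show ?thesis by simp
  qed
  then show "X = X' \<and> Y = Y'"
    using seq_gbasis_eq_iff[OF X X'] seq_gbasis_eq_iff[OF Y Y'] by blast
qed

definition seq_guess :: "nat \<Rightarrow> nat \<Rightarrow> nat \<Rightarrow> (nat \<Rightarrow> nat \<Rightarrow> nat) \<Rightarrow> nat \<Rightarrow> nat" where
  "seq_guess m d L X = (\<lambda>l. if l < L then guess m d (copy_of m l X) else undefined)"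

lemma seq_outcomes_memD: "c \<in> seq_outcomes d L \<Longrightarrow> l < L \<Longrightarrow> c l \<in> {1..d+2}"
  unfolding seq_outcomes_def by (erule PiE_mem) simp

lemma seq_guess_mem:
  assumes "X \<in> gbasis m (seq_LB d L)" "0 < m"
  shows "seq_guess m d L X \<in> seq_outcomes d L"
  unfolding seq_outcomes_def seq_guess_def
proof (rule PiE_I)
  fix l assume "l \<in> {..<L}"
  then show "(if l < L then guess m d (copy_of m l X) else undefined) \<in> {1..d+2}"
    using guess_mem[OF copy_of_mem[OF assms(1)] assms(2), of l] by simp
qed simp

lemma seq_rel_seq_guess:
  "X \<in> gbasis m (seq_LB d L) \<Longrightarrow> 0 < m \<Longrightarrow> seq_rel m L (ens_rel m d) (seq_guess m d L X) X X"
  unfolding seq_rel_def seq_guess_def by (auto intro: ens_rel_guess copy_of_mem)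

lemma seq_outcome_eq_iff:
  "c \<in> seq_outcomes d L \<Longrightarrow> c' \<in> seq_outcomes d L \<Longrightarrow> c = c' \<longleftrightarrow> (\<forall>l<L. c l = c' l)"
  unfolding seq_outcomes_def by (auto intro: PiE_ext)

lemma seq_meas_eq:
  assumes c: "c \<in> seq_outcomes d L" and X: "X \<in> gbasis m (seq_LB d L)" and Y: "Y \<in> gbasis m (seq_LB d L)"
    and m: "0 < m"
  shows "seq_op m L (meas_M m d) c X Y = basis_meas (seq_guess m d L) c X Y"
proof -
  have "seq_op m L (meas_M m d) c X Y
      = of_real (1 ^ L) * rel_op (seq_rel m L (\<lambda>i x y. x = y \<and> guess m d x = i) c) X Y"
  proof (rule seq_op_rel_op[OF _ _ X Y, where I = "{1..d+2}"])
    show "c l \<in> {1..d+2}" if "l < L" for l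
      by (rule seq_outcomes_memD[OF c that])
    show "meas_M m d i x y = of_real 1 * rel_op (\<lambda>x y. x = y \<and> guess m d x = i) x y"
      if "i \<in> {1..d+2}" "x \<in> gbasis m (qudit_LB d)" "y \<in> gbasis m (qudit_LB d)" for i x y
      using meas_M_eq[OF that(2,3) m that(1)] by (simp add: basis_meas_def)
  qed
  also have "\<dots> = basis_meas (seq_guess m d L) c X Y"
  proof -
    have "X = Y \<longleftrightarrow> (\<forall>l<L. copy_of m l X = copy_of m l Y)"
      by (rule seq_gbasis_eq_iff[OF X Y])
    moreover have "seq_guess m d L X = c \<longleftrightarrow> (\<forall>l<L. guess m d (copy_of m l X) = c l)"
      using seq_outcome_eq_iff[OF seq_guess_mem[OF X m] c] by (simp add: seq_guess_def)
    ultimately have "seq_rel m L (\<lambda>i x y. x = y \<and> guess m d x = i) c X Y \<longleftrightarrow> X = Y \<and> seq_guess m d L X = c"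
      unfolding seq_rel_def by blast
    then show ?thesis by (simp add: rel_op_def basis_meas_def)
  qed
  finally show ?thesis .
qed

lemma seq_weighted_eq:
  assumes c: "c \<in> seq_outcomes d L" and X: "X \<in> gbasis m (seq_LB d L)" and Y: "Y \<in> gbasis m (seq_LB d L)"
    and m: "1 < m" and d: "2 \<le> d"
  shows "of_real (seq_eta (ens_eta m d) L c) * seq_op m L (ens_rho m d) c X Y
       = of_real ((1 / (real d ^ m + real d)) ^ L) * rel_op (seq_rel m L (ens_rel m d) c) X Y"
  unfolding seq_eta_mult_seq_op
  by (rule seq_op_rel_op[OF seq_outcomes_memD[OF c] ens_weighted_eq[OF _ _ m d] X Y])

lemma qudit_ensemble_p_locc:
  assumes m: "1 < m" and d: "2 \<le> d"
  shows "p_locc m (qudit_LB d) {1..d+2} (ens_eta m d) (ens_rho m d) = real d ^ m / (real d ^ m + real d)"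
proof -
  have "p_locc m (qudit_LB d) {1..d+2} (ens_eta m d) (ens_rho m d)
      = 1 / (real d ^ m + real d) * card (gbasis m (qudit_LB d))
    \<and> p_sep m (qudit_LB d) {1..d+2} (ens_eta m d) (ens_rho m d)
      = 1 / (real d ^ m + real d) * card (gbasis m (qudit_LB d))"
  proof (rule p_locc_p_sep_eq[where k = 1 and R = "ens_rel m d" and f = "guess m d"])
    show "guess m d x \<in> {1..d+2}" if "x \<in> gbasis m (qudit_LB d)" for x
      using guess_mem[OF that] m by simp
    show "of_real (ens_eta m d i) * ens_rho m d i x y = of_real (1 / (real d ^ m + real d)) * rel_op (ens_rel m d i) x y"
      if "i \<in> {1..d+2}" "x \<in> gbasis m (qudit_LB d)" "y \<in> gbasis m (qudit_LB d)" for i x y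
      by (rule ens_weighted_eq[OF that(2,3) m d that(1)])
    show "swap_injective m (qudit_LB d) 1 (ens_rel m d i)" for i
      by (rule swap_injective_ens_rel[OF m])
    show "ens_rel m d (guess m d x) x x" if "x \<in> gbasis m (qudit_LB d)" for x
      using ens_rel_guess[OF that] m by simp
  qed (use m in \<open>simp_all add: finite_qudit_LB ens_rel_sym\<close>)
  then show ?thesis by (simp add: card_qudit_gbasis)
qed

lemma sequence_ensemble_p_locc_p_sep:
  assumes m: "1 < m" and d: "2 \<le> d"
  shows "p_locc m (seq_LB d L) (seq_outcomes d L) (seq_eta (ens_eta m d) L) (seq_op m L (ens_rho m d))
           = (real d ^ m / (real d ^ m + real d)) ^ L
       \<and> p_sep m (seq_LB d L) (seq_outcomes d L) (seq_eta (ens_eta m d) L) (seq_op m L (ens_rho m d))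
           = (real d ^ m / (real d ^ m + real d)) ^ L"
proof -
  have "p_locc m (seq_LB d L) (seq_outcomes d L) (seq_eta (ens_eta m d) L) (seq_op m L (ens_rho m d))
      = (1 / (real d ^ m + real d)) ^ L * card (gbasis m (seq_LB d L))
    \<and> p_sep m (seq_LB d L) (seq_outcomes d L) (seq_eta (ens_eta m d) L) (seq_op m L (ens_rho m d))
      = (1 / (real d ^ m + real d)) ^ L * card (gbasis m (seq_LB d L))"
  proof (rule p_locc_p_sep_eq[where k = 1 and R = "seq_rel m L (ens_rel m d)" and f = "seq_guess m d L"])
    show "seq_guess m d L X \<in> seq_outcomes d L" if "X \<in> gbasis m (seq_LB d L)" for X
      using seq_guess_mem[OF that] m by simp
    show "seq_outcomes d L \<noteq> {}"
      unfolding seq_outcomes_def by (simp add: PiE_eq_empty_iff)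
    show "of_real (seq_eta (ens_eta m d) L c) * seq_op m L (ens_rho m d) c X Y
        = of_real ((1 / (real d ^ m + real d)) ^ L) * rel_op (seq_rel m L (ens_rel m d) c) X Y"
      if "c \<in> seq_outcomes d L" "X \<in> gbasis m (seq_LB d L)" "Y \<in> gbasis m (seq_LB d L)" for c X Y
      by (rule seq_weighted_eq[OF that m d])
    show "swap_injective m (seq_LB d L) 1 (seq_rel m L (ens_rel m d) c)" for c
      by (rule swap_injective_seq_rel[OF m]) (rule swap_injective_ens_rel[OF m])
    show "seq_rel m L (ens_rel m d) (seq_guess m d L X) X X" if "X \<in> gbasis m (seq_LB d L)" for X
      using seq_rel_seq_guess[OF that] m by simp
  qed (use m in \<open>simp_all add: finite_seq_LB seq_outcomes_def finite_PiE seq_rel_sym ens_rel_sym\<close>)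
  moreover have "real (card (gbasis m (seq_LB d L))) = (real d ^ m) ^ L"
    by (simp add: card_seq_gbasis power_mult[symmetric] mult.commute)
  ultimately show ?thesis by (simp add: power_divide)
qed

lemma seqH_eq: "seqH m d L = (\<lambda>X Y. of_real ((1 / (real d ^ m + real d)) ^ L) * idop X Y)"
  unfolding seqH_def by (simp add: power_one_over)

lemma sequence_sep_dual:
  assumes m: "1 < m" and d: "2 \<le> d" and c: "c \<in> seq_outcomes d L"
  shows "sep_dual m (seq_LB d L)
           (\<lambda>X Y. seqH m d L X Y - of_real (seq_eta (ens_eta m d) L c) * seq_op m L (ens_rho m d) c X Y)"
proof -
  have inj: "swap_injective m (seq_LB d L) 1 (seq_rel m L (ens_rel m d) c)"
    by (rule swap_injective_seq_rel[OF m]) (rule swap_injective_ens_rel[OF m])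
  show ?thesis
    unfolding seqH_eq
    by (rule sep_dual_scaled_complement[OF finite_seq_LB m _ inj _ seq_weighted_eq[OF c _ _ m d]])
      (simp_all add: seq_rel_sym ens_rel_sym)
qed

lemma sequence_complementary_slackness:
  assumes m: "1 < m" and d: "2 \<le> d" and c: "c \<in> seq_outcomes d L"
  shows "tr (gbasis m (seq_LB d L)) (mmult (gbasis m (seq_LB d L)) (seq_op m L (meas_M m d) c)
           (\<lambda>X Y. seqH m d L X Y - of_real (seq_eta (ens_eta m d) L c) * seq_op m L (ens_rho m d) c X Y)) = 0"
proof -
  let ?G = "gbasis m (seq_LB d L)"
  have m0: "0 < m" using m by simp
  have "tr ?G (mmult ?G (seq_op m L (meas_M m d) c)
           (\<lambda>X Y. seqH m d L X Y - of_real (seq_eta (ens_eta m d) L c) * seq_op m L (ens_rho m d) c X Y))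
      = (\<Sum>X\<in>?G. if seq_guess m d L X = c
           then seqH m d L X X - of_real (seq_eta (ens_eta m d) L c) * seq_op m L (ens_rho m d) c X X else 0)"
    by (simp add: tr_mmult_cong_left[OF seq_meas_eq[OF c _ _ m0]] tr_mmult_basis_meas_left finite_gbasis finite_seq_LB)
  also have "\<dots> = 0"
  proof (intro sum.neutral ballI)
    fix X assume X: "X \<in> ?G"
    show "(if seq_guess m d L X = c
        then seqH m d L X X - of_real (seq_eta (ens_eta m d) L c) * seq_op m L (ens_rho m d) c X X else 0) = 0"
      using seq_rel_seq_guess[OF X m0] seq_weighted_eq[OF c X X m d] by (auto simp: seqH_eq rel_op_def idop_def)
  qed
  finally show ?thesis .
qed

theorem mainTheorem8:
  fixes m d L :: nat
  assumes "2 \<le> m" and "2 \<le> d" and "2 \<le> L"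
  shows "(\<Prod>l<L. p_locc m (qudit_LB d) {1..d+2} (ens_eta m d) (ens_rho m d))
           = p_locc m (seq_LB d L) (seq_outcomes d L)
               (seq_eta (ens_eta m d) L) (seq_op m L (ens_rho m d))
       \<and> p_locc m (seq_LB d L) (seq_outcomes d L)
               (seq_eta (ens_eta m d) L) (seq_op m L (ens_rho m d))
           = p_sep m (seq_LB d L) (seq_outcomes d L)
               (seq_eta (ens_eta m d) L) (seq_op m L (ens_rho m d))
       \<and> locc m (qudit_LB d) {1..d+2} (meas_M m d)
       \<and> (\<forall>c \<in> seq_outcomes d L.
            sep_dual m (seq_LB d L)
              (\<lambda>X Y. seqH m d L X Y
                 - of_real (seq_eta (ens_eta m d) L c) * seq_op m L (ens_rho m d) c X Y)
          \<and> tr (gbasis m (seq_LB d L))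
              (mmult (gbasis m (seq_LB d L)) (seq_op m L (meas_M m d) c)
                 (\<lambda>X Y. seqH m d L X Y
                    - of_real (seq_eta (ens_eta m d) L c) * seq_op m L (ens_rho m d) c X Y)) = 0)"
proof -
  have m: "1 < m" using assms(1) by simp
  note sequence = sequence_ensemble_p_locc_p_sep[OF m assms(2), of L]
  have "(\<Prod>l<L. p_locc m (qudit_LB d) {1..d+2} (ens_eta m d) (ens_rho m d))
      = p_locc m (seq_LB d L) (seq_outcomes d L) (seq_eta (ens_eta m d) L) (seq_op m L (ens_rho m d))"
    using qudit_ensemble_p_locc[OF m assms(2)] sequence by simp
  then show ?thesis
    using sequence locc_meas_M[of m d] m sequence_sep_dual[OF m assms(2)]
      sequence_complementary_slackness[OF m assms(2)] by simp
qed

end
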